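(* For any set $\Gamma$ of sentences over $\sigma_1$ and any sentence $F$ over $\sigma_1$, $F$ can be derived from $\Gamma$ in $\mathit{HT}_{\#}^{\omega}$ if and only if every standard HT-interpretation of $\sigma_1$ that satisfies (in the sense of $\models_{ht}$) all members of $\Gamma$ satisfies $F$.
   Context: Precomputed terms: a totally ordered set containing all numerals $\overline n$ ($n$ an integer, in 1-1 correspondence with the integers), all symbolic constants and possibly other symbols, in which numerals are contiguous and ordered as the integers. Formulas are two-sorted, with sort general and its subsort integer. Signature $\sigma_0$: numerals as integer object constants; other precomputed terms as general object constants; $|\cdot|,+,-,\times$ as function constants on integers; predicate constants $p/n$ (written $p(\mathbf t)$) with general arguments; binary predicate constants $\neq,<,>,\le,\ge$ ("comparison symbols") with general arguments ($=$ is logical equality). $\sigma_1$ adds, for disjoint lists $\mathbf X,\mathbf V$ of distinct general variables and formula $F$ over $\sigma_0$ with free variables among $\mathbf X,\mathbf V$, predicate constants $\mathit{Atleast}^{\mathbf X;\mathbf V}_F,\mathit{Atmost}^{\mathbf X;\mathbf V}_F$ with $|\mathbf V|+1$ general arguments. Comparison symbols are extensional; $p/n$, $\mathit{Atleast}$, $\mathit{Atmost}$ are intensional. A standard interpretation of $\sigma_0$ has general domain the precomputed terms, integer domain the numerals, object constants denoting themselves, arithmetic symbols with their usual meaning and comparison symbols given by the order on precomputed terms. $\mathit{Std}$: all sentences over $\sigma_0$ without symbols $p/n$ satisfied by standard interpretations. For a precomputed term $r$: $\exists_{\ge r}\mathbf X\,F$ is $\exists\mathbf X_1\cdots\mathbf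 X_n(\bigwedge_{i=1}^nF^{\mathbf X}_{\mathbf X_i}\wedge\bigwedge_{i<j}\neg(\mathbf X_i=\mathbf X_j))$ if $r=\overline n>\overline0$, $\top$ if $r\le\overline0$, $\bot$ if $r>\overline n$ for all $n$; $\exists_{\le r}\mathbf X\,F$ is $\forall\mathbf X_1\cdots\mathbf X_{n+1}(\bigwedge_{i=1}^{n+1}F^{\mathbf X}_{\mathbf X_i}\to\bigvee_{i<j}\mathbf X_i=\mathbf X_j)$ if $r=\overline n\ge\overline0$, $\bot$ if $r<\overline0$, $\top$ if $r>\overline n$ for all $n$. $\mathit{Defs}$: all sentences $\forall\mathbf V(\mathit{Atleast}^{\mathbf X;\mathbf V}_F(\mathbf V,r)\leftrightarrow\exists_{\ge r}\mathbf XF)$ and $\forall\mathbf V(\mathit{Atmost}^{\mathbf X;\mathbf V}_F(\mathbf V,r)\leftrightarrow\exists_{\le r}\mathbf XF)$. $\mathit{HT}_{\#}^{\omega}$ is the natural deduction system for first-order intuitionistic logic with equality over the two-sorted signature $\sigma_1$ with sequents $\Gamma\Rightarrow F$ ($\Gamma$ finite; $\Rightarrow F$ identified with $F$), extended by all formulas $F\vee(F\to G)\vee\neg G$ and $\exists X(F\to\forall XF)$ over $\sigma_1$, the axioms $\mathit{Std}$ and $\mathit{Defs}$, and the $\omega$-rules: from $\Gamma\Rightarrow F^X_t$ for all precomputed terms $t$ infer $\Gamma\Rightarrow\forall XF$ ($X$ general), and from $\Gamma\Rightarrow F^N_{\overline n}$ for all integers $n$ infer $\Gamma\Rightarrow\forall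 NF$ ($N$ integer). Deriving $F$ from $\Gamma$ means deriving it using members of $\Gamma$ as assumptions. HT-interpretations: for an interpretation $I$ of $\sigma_1$, $\sigma_1^I$ adds names $d^*$ for domain elements; $I^{\downarrow}$ is the set of atoms $p(\mathbf d^* )$ with $p$ intensional and $I\models p(\mathbf d^* )$; an HT-interpretation is $\langle\mathcal H,I\rangle$ with $\mathcal H\subseteq I^{\downarrow}$. $\models_{ht}$: intensional atoms $p(\mathbf t)$ hold iff $p(\mathbf d^* )\in\mathcal H$ for $\mathbf d$ the values of $\mathbf t$ in $I$; extensional atoms and equalities iff $I$ satisfies them; $\bot$ never; $\neg F$ iff $I\not\models F$; $\wedge,\vee$ componentwise; $F\to G$ iff ($\not\models_{ht}F$ or $\models_{ht}G$) and $I\models F\to G$; $\forall$/$\exists$ over all/some domain elements. An HT-interpretation $\langle\mathcal H,I\rangle$ of $\sigma_1$ is standard if the restriction of $I$ to $\sigma_0$ is standard and $\langle\mathcal H,I\rangle\models_{ht}\mathit{Defs}$. *)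

theory Defs
  imports Main "HOL-Library.Countable"
begin

section \<open>Syntax of sigma_1\<close>

text \<open>Variables: general variables GV n and integer variables IV n.\<close>
datatype var = GV nat | IV nat

datatype cmp = CNeq | CLt | CGt | CLe | CGe

text \<open>Terms; object constants are the precomputed terms (type 'c).\<close>
datatype 'c trm = Var var | Cst 'c | TAbs "'c trm" | TPlus "'c trm" "'c trm"
  | TMinus "'c trm" "'c trm" | TTimes "'c trm" "'c trm"

text \<open>Formulas over sigma_1.  Pred p ts is the atom p/n(ts) with n = length ts.
  AtLeast X V F ts is the atom Atleast^{X;V}_F(ts) (same for AtMost).\<close>
datatype ('c,'p) form = Bot | Pred 'p "'c trm list" | Cmp cmp "'c trm" "'c trm"
  | Eq "'c trm" "'c trm"
  | And "('c,'p) form" "('c,'p) form" | Or "('c,'p) form" "('c,'p) form"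
  | Imp "('c,'p) form" "('c,'p) form"
  | All var "('c,'p) form" | Ex var "('c,'p) form"
  | AtLeast "nat list" "nat list" "('c,'p) form" "'c trm list"
  | AtMost "nat list" "nat list" "('c,'p) form" "'c trm list"

definition Neg :: "('c,'p) form \<Rightarrow> ('c,'p) form" where "Neg F = Imp F Bot"
definition Top :: "('c,'p) form" where "Top = Neg Bot"
definition Iff :: "('c,'p) form \<Rightarrow> ('c,'p) form \<Rightarrow> ('c,'p) form" where
  "Iff F G = And (Imp F G) (Imp G F)"

fun fvt :: "'c trm \<Rightarrow> var set" where
  "fvt (Var v) = {v}"
| "fvt (Cst c) = {}"
| "fvt (TAbs t) = fvt t"
| "fvt (TPlus a b) = fvt a \<union> fvt b"
| "fvt (TMinus a b) = fvt a \<union> fvt b"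
| "fvt (TTimes a b) = fvt a \<union> fvt b"

text \<open>Free variables (the formula inside an Atleast/Atmost symbol is part of the symbol).\<close>
fun fv :: "('c,'p) form \<Rightarrow> var set" where
  "fv Bot = {}"
| "fv (Pred p ts) = \<Union> (fvt ` set ts)"
| "fv (Cmp c a b) = fvt a \<union> fvt b"
| "fv (Eq a b) = fvt a \<union> fvt b"
| "fv (And F G) = fv F \<union> fv G"
| "fv (Or F G) = fv F \<union> fv G"
| "fv (Imp F G) = fv F \<union> fv G"
| "fv (All x F) = fv F - {x}"
| "fv (Ex x F) = fv F - {x}"
| "fv (AtLeast X V F ts) = \<Union> (fvt ` set ts)"
| "fv (AtMost X V F ts) = \<Union> (fvt ` set ts)"

fun allvars :: "('c,'p) form \<Rightarrow> var set" where
  "allvars Bot = {}"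
| "allvars (Pred p ts) = \<Union> (fvt ` set ts)"
| "allvars (Cmp c a b) = fvt a \<union> fvt b"
| "allvars (Eq a b) = fvt a \<union> fvt b"
| "allvars (And F G) = allvars F \<union> allvars G"
| "allvars (Or F G) = allvars F \<union> allvars G"
| "allvars (Imp F G) = allvars F \<union> allvars G"
| "allvars (All x F) = insert x (allvars F)"
| "allvars (Ex x F) = insert x (allvars F)"
| "allvars (AtLeast X V F ts) = \<Union> (fvt ` set ts)"
| "allvars (AtMost X V F ts) = \<Union> (fvt ` set ts)"

fun substt :: "(var \<Rightarrow> 'c trm) \<Rightarrow> 'c trm \<Rightarrow> 'c trm" where
  "substt s (Var v) = s v"
| "substt s (Cst c) = Cst c"
| "substt s (TAbs t) = TAbs (substt s t)"
| "substt s (TPlus a b) = TPlus (substt s a) (substt s b)"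
| "substt s (TMinus a b) = TMinus (substt s a) (substt s b)"
| "substt s (TTimes a b) = TTimes (substt s a) (substt s b)"

fun subst :: "(var \<Rightarrow> 'c trm) \<Rightarrow> ('c,'p) form \<Rightarrow> ('c,'p) form" where
  "subst s Bot = Bot"
| "subst s (Pred p ts) = Pred p (map (substt s) ts)"
| "subst s (Cmp c a b) = Cmp c (substt s a) (substt s b)"
| "subst s (Eq a b) = Eq (substt s a) (substt s b)"
| "subst s (And F G) = And (subst s F) (subst s G)"
| "subst s (Or F G) = Or (subst s F) (subst s G)"
| "subst s (Imp F G) = Imp (subst s F) (subst s G)"
| "subst s (All x F) = All x (subst (s(x := Var x)) F)"
| "subst s (Ex x F) = Ex x (subst (s(x := Var x)) F)"
| "subst s (AtLeast X V F ts) = AtLeast X V F (map (substt s) ts)"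
| "subst s (AtMost X V F ts) = AtMost X V F (map (substt s) ts)"

fun substok :: "(var \<Rightarrow> 'c trm) \<Rightarrow> ('c,'p) form \<Rightarrow> bool" where
  "substok s (And F G) = (substok s F \<and> substok s G)"
| "substok s (Or F G) = (substok s F \<and> substok s G)"
| "substok s (Imp F G) = (substok s F \<and> substok s G)"
| "substok s (All x F) = (substok (s(x := Var x)) F \<and> (\<forall>y\<in>fv (All x F). x \<notin> fvt (s y)))"
| "substok s (Ex x F) = (substok (s(x := Var x)) F \<and> (\<forall>y\<in>fv (Ex x F). x \<notin> fvt (s y)))"
| "substok s _ = True"

definition sub1 :: "var \<Rightarrow> 'c trm \<Rightarrow> ('c,'p) form \<Rightarrow> ('c,'p) form" where
  "sub1 x t F = subst ((\<lambda>v. Var v)(x := t)) F"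

definition sub1ok :: "var \<Rightarrow> 'c trm \<Rightarrow> ('c,'p) form \<Rightarrow> bool" where
  "sub1ok x t F = substok ((\<lambda>v. Var v)(x := t)) F"

section \<open>Well-formedness (sorts), parameterised by the numeral embedding num\<close>

fun is_int :: "(int \<Rightarrow> 'c) \<Rightarrow> 'c trm \<Rightarrow> bool" where
  "is_int num (Var (GV n)) = False"
| "is_int num (Var (IV n)) = True"
| "is_int num (Cst c) = (c \<in> range num)"
| "is_int num (TAbs t) = is_int num t"
| "is_int num (TPlus a b) = (is_int num a \<and> is_int num b)"
| "is_int num (TMinus a b) = (is_int num a \<and> is_int num b)"
| "is_int num (TTimes a b) = (is_int num a \<and> is_int num b)"

fun wf_trm :: "(int \<Rightarrow> 'c) \<Rightarrow> 'c trm \<Rightarrow> bool" where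
  "wf_trm num (Var v) = True"
| "wf_trm num (Cst c) = True"
| "wf_trm num (TAbs t) = is_int num t"
| "wf_trm num (TPlus a b) = (is_int num a \<and> is_int num b)"
| "wf_trm num (TMinus a b) = (is_int num a \<and> is_int num b)"
| "wf_trm num (TTimes a b) = (is_int num a \<and> is_int num b)"

fun sigma0 :: "('c,'p) form \<Rightarrow> bool" where
  "sigma0 (And F G) = (sigma0 F \<and> sigma0 G)"
| "sigma0 (Or F G) = (sigma0 F \<and> sigma0 G)"
| "sigma0 (Imp F G) = (sigma0 F \<and> sigma0 G)"
| "sigma0 (All x F) = sigma0 F"
| "sigma0 (Ex x F) = sigma0 F"
| "sigma0 (AtLeast X V F ts) = False"
| "sigma0 (AtMost X V F ts) = False"
| "sigma0 _ = True"

fun nopred :: "('c,'p) form \<Rightarrow> bool" where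
  "nopred (Pred p ts) = False"
| "nopred (And F G) = (nopred F \<and> nopred G)"
| "nopred (Or F G) = (nopred F \<and> nopred G)"
| "nopred (Imp F G) = (nopred F \<and> nopred G)"
| "nopred (All x F) = nopred F"
| "nopred (Ex x F) = nopred F"
| "nopred _ = True"

fun wf :: "(int \<Rightarrow> 'c) \<Rightarrow> ('c,'p) form \<Rightarrow> bool" where
  "wf num Bot = True"
| "wf num (Pred p ts) = list_all (wf_trm num) ts"
| "wf num (Cmp c a b) = (wf_trm num a \<and> wf_trm num b)"
| "wf num (Eq a b) = (wf_trm num a \<and> wf_trm num b)"
| "wf num (And F G) = (wf num F \<and> wf num G)"
| "wf num (Or F G) = (wf num F \<and> wf num G)"
| "wf num (Imp F G) = (wf num F \<and> wf num G)"
| "wf num (All x F) = wf num F"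
| "wf num (Ex x F) = wf num F"
| "wf num (AtLeast X V F ts) = (distinct X \<and> distinct V \<and> set X \<inter> set V = {} \<and> sigma0 F
     \<and> wf num F \<and> fv F \<subseteq> GV ` (set X \<union> set V)
     \<and> length ts = Suc (length V) \<and> list_all (wf_trm num) ts)"
| "wf num (AtMost X V F ts) = (distinct X \<and> distinct V \<and> set X \<inter> set V = {} \<and> sigma0 F
     \<and> wf num F \<and> fv F \<subseteq> GV ` (set X \<union> set V)
     \<and> length ts = Suc (length V) \<and> list_all (wf_trm num) ts)"

definition sym_ok :: "(int \<Rightarrow> 'c) \<Rightarrow> nat list \<Rightarrow> nat list \<Rightarrow> ('c,'p) form \<Rightarrow> bool" where
  "sym_ok num X V F = (distinct X \<and> distinct V \<and> set X \<inter> set V = {} \<and> sigma0 F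
     \<and> wf num F \<and> fv F \<subseteq> GV ` (set X \<union> set V))"

definition sentence :: "(int \<Rightarrow> 'c) \<Rightarrow> ('c,'p) form \<Rightarrow> bool" where
  "sentence num F = (wf num F \<and> fv F = {})"

fun sort_ok :: "(int \<Rightarrow> 'c) \<Rightarrow> var \<Rightarrow> 'c trm \<Rightarrow> bool" where
  "sort_ok num (GV n) t = wf_trm num t"
| "sort_ok num (IV n) t = is_int num t"

section \<open>Semantics: standard interpretations and HT-interpretations\<close>

definition toint :: "(int \<Rightarrow> 'c) \<Rightarrow> 'c \<Rightarrow> int" where
  "toint num c = the_inv num c"

fun eval :: "(int \<Rightarrow> 'c) \<Rightarrow> (var \<Rightarrow> 'c) \<Rightarrow> 'c trm \<Rightarrow> 'c" where
  "eval num env (Var v) = env v"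
| "eval num env (Cst c) = c"
| "eval num env (TAbs t) = num \<bar>toint num (eval num env t)\<bar>"
| "eval num env (TPlus a b) = num (toint num (eval num env a) + toint num (eval num env b))"
| "eval num env (TMinus a b) = num (toint num (eval num env a) - toint num (eval num env b))"
| "eval num env (TTimes a b) = num (toint num (eval num env a) * toint num (eval num env b))"

fun cmpsem :: "cmp \<Rightarrow> 'c::linorder \<Rightarrow> 'c \<Rightarrow> bool" where
  "cmpsem CNeq a b = (a \<noteq> b)"
| "cmpsem CLt a b = (a < b)"
| "cmpsem CGt a b = (a > b)"
| "cmpsem CLe a b = (a \<le> b)"
| "cmpsem CGe a b = (a \<ge> b)"

text \<open>Ground intensional atoms p(d*), Atleast(d*), Atmost(d*) (d* names of domain elements).\<close>
datatype ('c,'p) gatom = GP 'p "'c list"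
  | GAL "nat list" "nat list" "('c,'p) form" "'c list"
  | GAM "nat list" "nat list" "('c,'p) form" "'c list"

text \<open>An interpretation I of sigma_1 whose restriction to sigma_0 is standard is determined
  by the set T = I-down of intensional ground atoms it satisfies.  csat: I |= F.\<close>
fun csat :: "(int \<Rightarrow> 'c::linorder) \<Rightarrow> ('c,'p) gatom set \<Rightarrow> (var \<Rightarrow> 'c) \<Rightarrow> ('c,'p) form \<Rightarrow> bool" where
  "csat num T env Bot = False"
| "csat num T env (Pred p ts) = (GP p (map (eval num env) ts) \<in> T)"
| "csat num T env (Cmp c a b) = cmpsem c (eval num env a) (eval num env b)"
| "csat num T env (Eq a b) = (eval num env a = eval num env b)"
| "csat num T env (And F G) = (csat num T env F \<and> csat num T env G)"
| "csat num T env (Or F G) = (csat num T env F \<or> csat num T env G)"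
| "csat num T env (Imp F G) = (csat num T env F \<longrightarrow> csat num T env G)"
| "csat num T env (All (GV n) F) = (\<forall>d. csat num T (env(GV n := d)) F)"
| "csat num T env (All (IV n) F) = (\<forall>k. csat num T (env(IV n := num k)) F)"
| "csat num T env (Ex (GV n) F) = (\<exists>d. csat num T (env(GV n := d)) F)"
| "csat num T env (Ex (IV n) F) = (\<exists>k. csat num T (env(IV n := num k)) F)"
| "csat num T env (AtLeast X V F ts) = (GAL X V F (map (eval num env) ts) \<in> T)"
| "csat num T env (AtMost X V F ts) = (GAM X V F (map (eval num env) ts) \<in> T)"

text \<open>HT-satisfaction by the HT-interpretation (H, I), I given by T.\<close>
fun htsat :: "(int \<Rightarrow> 'c::linorder) \<Rightarrow> ('c,'p) gatom set \<Rightarrow> ('c,'p) gatom set \<Rightarrow> (var \<Rightarrow> 'c)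
    \<Rightarrow> ('c,'p) form \<Rightarrow> bool" where
  "htsat num H T env Bot = False"
| "htsat num H T env (Pred p ts) = (GP p (map (eval num env) ts) \<in> H)"
| "htsat num H T env (Cmp c a b) = cmpsem c (eval num env a) (eval num env b)"
| "htsat num H T env (Eq a b) = (eval num env a = eval num env b)"
| "htsat num H T env (And F G) = (htsat num H T env F \<and> htsat num H T env G)"
| "htsat num H T env (Or F G) = (htsat num H T env F \<or> htsat num H T env G)"
| "htsat num H T env (Imp F G) = ((htsat num H T env F \<longrightarrow> htsat num H T env G)
      \<and> csat num T env (Imp F G))"
| "htsat num H T env (All (GV n) F) = (\<forall>d. htsat num H T (env(GV n := d)) F)"
| "htsat num H T env (All (IV n) F) = (\<forall>k. htsat num H T (env(IV n := num k)) F)"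
| "htsat num H T env (Ex (GV n) F) = (\<exists>d. htsat num H T (env(GV n := d)) F)"
| "htsat num H T env (Ex (IV n) F) = (\<exists>k. htsat num H T (env(IV n := num k)) F)"
| "htsat num H T env (AtLeast X V F ts) = (GAL X V F (map (eval num env) ts) \<in> H)"
| "htsat num H T env (AtMost X V F ts) = (GAM X V F (map (eval num env) ts) \<in> H)"

text \<open>For sentences the assignment is irrelevant; we use a fixed one.\<close>
definition env0 :: "(int \<Rightarrow> 'c) \<Rightarrow> var \<Rightarrow> 'c" where "env0 num = (\<lambda>_. num 0)"

definition ht_models :: "(int \<Rightarrow> 'c::linorder) \<Rightarrow> ('c,'p) gatom set \<Rightarrow> ('c,'p) gatom set
    \<Rightarrow> ('c,'p) form \<Rightarrow> bool" where
  "ht_models num H T F = htsat num H T (env0 num) F"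

section \<open>Counting formulas and the axioms Defs\<close>

fun conjl :: "('c,'p) form list \<Rightarrow> ('c,'p) form" where
  "conjl [] = Top"
| "conjl [A] = A"
| "conjl (A # B # As) = And A (conjl (B # As))"

fun disjl :: "('c,'p) form list \<Rightarrow> ('c,'p) form" where
  "disjl [] = Bot"
| "disjl [A] = A"
| "disjl (A # B # As) = Or A (disjl (B # As))"

definition exs :: "var list \<Rightarrow> ('c,'p) form \<Rightarrow> ('c,'p) form" where
  "exs vs F = foldr Ex vs F"

definition alls :: "var list \<Rightarrow> ('c,'p) form \<Rightarrow> ('c,'p) form" where
  "alls vs F = foldr All vs F"

definition ren :: "nat list \<Rightarrow> nat list \<Rightarrow> ('c,'p) form \<Rightarrow> ('c,'p) form" where
  "ren X Y F = subst (\<lambda>v. case map_of (zip (map GV X) (map (\<lambda>y. Var (GV y)) Y)) v of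
       None \<Rightarrow> Var v | Some t \<Rightarrow> t) F"

definition eqsl :: "nat list \<Rightarrow> nat list \<Rightarrow> ('c,'p) form" where
  "eqsl Y Z = conjl (map2 (\<lambda>a b. Eq (Var (GV a)) (Var (GV b))) Y Z)"

definition pairs :: "nat \<Rightarrow> (nat \<times> nat) list" where
  "pairs n = [(i,j). i \<leftarrow> [0..<n], j \<leftarrow> [Suc i..<n]]"

text \<open>exists_{>= n} X F with copies Ys = [X_1,...,X_n].\<close>
definition exge :: "nat list \<Rightarrow> ('c,'p) form \<Rightarrow> nat list list \<Rightarrow> ('c,'p) form" where
  "exge X F Ys = exs (map GV (concat Ys))
     (And (conjl (map (\<lambda>Y. ren X Y F) Ys))
          (conjl (map (\<lambda>(i,j). Neg (eqsl (Ys ! i) (Ys ! j))) (pairs (length Ys)))))"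

text \<open>exists_{<= n} X F with copies Ys = [X_1,...,X_{n+1}].\<close>
definition exle :: "nat list \<Rightarrow> ('c,'p) form \<Rightarrow> nat list list \<Rightarrow> ('c,'p) form" where
  "exle X F Ys = alls (map GV (concat Ys))
     (Imp (conjl (map (\<lambda>Y. ren X Y F) Ys))
          (disjl (map (\<lambda>(i,j). eqsl (Ys ! i) (Ys ! j)) (pairs (length Ys)))))"

definition fresh :: "nat list \<Rightarrow> nat list \<Rightarrow> ('c,'p) form \<Rightarrow> nat list list \<Rightarrow> bool" where
  "fresh X V F Ys = ((\<forall>Y\<in>set Ys. length Y = length X) \<and> distinct (concat Ys)
      \<and> GV ` set (concat Ys) \<inter> (allvars F \<union> GV ` (set X \<union> set V)) = {})"

definition atleast_ax :: "(int \<Rightarrow> 'c::linorder) \<Rightarrow> nat list \<Rightarrow> nat list \<Rightarrow> ('c,'p) form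
    \<Rightarrow> ('c,'p) form \<Rightarrow> bool" where
  "atleast_ax num X V F G = (\<exists>r. let A = AtLeast X V F (map (\<lambda>v. Var (GV v)) V @ [Cst r]) in
      (\<exists>n Ys. n > 0 \<and> r = num n \<and> fresh X V F Ys \<and> length Ys = nat n
          \<and> G = alls (map GV V) (Iff A (exge X F Ys)))
    \<or> (r \<le> num 0 \<and> G = alls (map GV V) (Iff A Top))
    \<or> ((\<forall>n. num n < r) \<and> G = alls (map GV V) (Iff A Bot)))"

definition atmost_ax :: "(int \<Rightarrow> 'c::linorder) \<Rightarrow> nat list \<Rightarrow> nat list \<Rightarrow> ('c,'p) form
    \<Rightarrow> ('c,'p) form \<Rightarrow> bool" where
  "atmost_ax num X V F G = (\<exists>r. let A = AtMost X V F (map (\<lambda>v. Var (GV v)) V @ [Cst r]) in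
      (\<exists>n Ys. n \<ge> 0 \<and> r = num n \<and> fresh X V F Ys \<and> length Ys = Suc (nat n)
          \<and> G = alls (map GV V) (Iff A (exle X F Ys)))
    \<or> (r < num 0 \<and> G = alls (map GV V) (Iff A Bot))
    \<or> ((\<forall>n. num n < r) \<and> G = alls (map GV V) (Iff A Top)))"

definition DefsAx :: "(int \<Rightarrow> 'c::linorder) \<Rightarrow> ('c,'p) form set" where
  "DefsAx num = {G. \<exists>X V F. sym_ok num X V F \<and> (atleast_ax num X V F G \<or> atmost_ax num X V F G)}"

definition StdAx :: "(int \<Rightarrow> 'c::linorder) \<Rightarrow> ('c,'p) form set" where
  "StdAx num = {F. sentence num F \<and> sigma0 F \<and> nopred F \<and> csat num {} (env0 num) F}"

definition HTAx :: "(int \<Rightarrow> 'c) \<Rightarrow> ('c,'p) form set" where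
  "HTAx num = {Or A (Or (Imp A B) (Neg B)) | A B. wf num A \<and> wf num B}"

definition SQAx :: "(int \<Rightarrow> 'c) \<Rightarrow> ('c,'p) form set" where
  "SQAx num = {Ex (GV n) (Imp A (All (GV n) A)) | n A. wf num A}"

definition Axioms :: "(int \<Rightarrow> 'c::linorder) \<Rightarrow> ('c,'p) form set" where
  "Axioms num = HTAx num \<union> SQAx num \<union> StdAx num \<union> DefsAx num"

definition standard_ht :: "(int \<Rightarrow> 'c::linorder) \<Rightarrow> ('c,'p) gatom set \<Rightarrow> ('c,'p) gatom set \<Rightarrow> bool" where
  "standard_ht num H T = (H \<subseteq> T \<and> (\<forall>D\<in>DefsAx num. ht_models num H T D))"

section \<open>The deductive system HT_#^omega\<close>

definition wfseq :: "(int \<Rightarrow> 'c) \<Rightarrow> ('c,'p) form set \<Rightarrow> ('c,'p) form \<Rightarrow> bool" where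
  "wfseq num D F = (finite D \<and> (\<forall>G\<in>D. wf num G) \<and> wf num F)"

definition fvs :: "('c,'p) form set \<Rightarrow> var set" where
  "fvs D = \<Union> (fv ` D)"

inductive deriv :: "(int \<Rightarrow> 'c::linorder) \<Rightarrow> ('c,'p) form set \<Rightarrow> ('c,'p) form set
    \<Rightarrow> ('c,'p) form \<Rightarrow> bool" for num Gam where
  assm: "\<lbrakk>F \<in> D; wfseq num D F\<rbrakk> \<Longrightarrow> deriv num Gam D F"
| axiom: "\<lbrakk>F \<in> Axioms num \<union> Gam; wfseq num D F\<rbrakk> \<Longrightarrow> deriv num Gam D F"
| weaken: "\<lbrakk>deriv num Gam D F; D \<subseteq> D'; wfseq num D' F\<rbrakk> \<Longrightarrow> deriv num Gam D' F"
| andI: "\<lbrakk>deriv num Gam D F; deriv num Gam D G; wfseq num D (And F G)\<rbrakk> \<Longrightarrow> deriv num Gam D (And F G)"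
| andE1: "\<lbrakk>deriv num Gam D (And F G); wfseq num D F\<rbrakk> \<Longrightarrow> deriv num Gam D F"
| andE2: "\<lbrakk>deriv num Gam D (And F G); wfseq num D G\<rbrakk> \<Longrightarrow> deriv num Gam D G"
| orI1: "\<lbrakk>deriv num Gam D F; wfseq num D (Or F G)\<rbrakk> \<Longrightarrow> deriv num Gam D (Or F G)"
| orI2: "\<lbrakk>deriv num Gam D G; wfseq num D (Or F G)\<rbrakk> \<Longrightarrow> deriv num Gam D (Or F G)"
| orE: "\<lbrakk>deriv num Gam D (Or F G); deriv num Gam (insert F D) H; deriv num Gam (insert G D) H;
         wfseq num D H\<rbrakk> \<Longrightarrow> deriv num Gam D H"
| impI: "\<lbrakk>deriv num Gam (insert F D) G; wfseq num D (Imp F G)\<rbrakk> \<Longrightarrow> deriv num Gam D (Imp F G)"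
| impE: "\<lbrakk>deriv num Gam D F; deriv num Gam D (Imp F G); wfseq num D G\<rbrakk> \<Longrightarrow> deriv num Gam D G"
| botE: "\<lbrakk>deriv num Gam D Bot; wfseq num D F\<rbrakk> \<Longrightarrow> deriv num Gam D F"
| allI: "\<lbrakk>deriv num Gam D F; x \<notin> fvs D; wfseq num D (All x F)\<rbrakk> \<Longrightarrow> deriv num Gam D (All x F)"
| allE: "\<lbrakk>deriv num Gam D (All x F); sort_ok num x t; sub1ok x t F; wfseq num D (sub1 x t F)\<rbrakk>
         \<Longrightarrow> deriv num Gam D (sub1 x t F)"
| exI: "\<lbrakk>deriv num Gam D (sub1 x t F); sort_ok num x t; sub1ok x t F; wfseq num D (Ex x F)\<rbrakk>
         \<Longrightarrow> deriv num Gam D (Ex x F)"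
| exE: "\<lbrakk>deriv num Gam D (Ex x F); deriv num Gam (insert F D) G; x \<notin> fvs D; x \<notin> fv G;
         wfseq num D G\<rbrakk> \<Longrightarrow> deriv num Gam D G"
| eqRefl: "wfseq num D (Eq t t) \<Longrightarrow> deriv num Gam D (Eq t t)"
| eqSubst: "\<lbrakk>deriv num Gam D (Eq t1 t2); deriv num Gam D (sub1 x t1 F); sub1ok x t1 F; sub1ok x t2 F;
         wfseq num D (sub1 x t2 F)\<rbrakk> \<Longrightarrow> deriv num Gam D (sub1 x t2 F)"
| omegaG: "\<lbrakk>\<forall>c. deriv num Gam D (sub1 (GV n) (Cst c) F); wfseq num D (All (GV n) F)\<rbrakk>
         \<Longrightarrow> deriv num Gam D (All (GV n) F)"
| omegaI: "\<lbrakk>\<forall>k. deriv num Gam D (sub1 (IV n) (Cst (num k)) F); wfseq num D (All (IV n) F)\<rbrakk>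
         \<Longrightarrow> deriv num Gam D (All (IV n) F)"

definition derivable :: "(int \<Rightarrow> 'c::linorder) \<Rightarrow> ('c,'p) form set \<Rightarrow> ('c,'p) form \<Rightarrow> bool" where
  "derivable num Gam F = deriv num Gam {} F"

end

theory Submission
  imports Defs
begin

text \<open>
  The one subtle case is implication introduction: the
  there-component of an implication is evaluated classically, and if \<open>\<langle>H, T\<rangle>\<close> is a standard
  model of \<open>\<Gamma>\<close>, so is the total interpretation \<open>\<langle>T, T\<rangle>\<close>.

  For completeness, let \<open>F\<close> be underivable. Running through an enumeration of all sentences,
  a Lindenbaum construction either accepts a sentence (together with a disjunct or an instance
  witnessing it) or rejects it (together with a rejected instance, if it is universal), keeping
  the rejected sentences underivable from the accepted ones. The accepted sentences form a prime
  theory \<open>here\<close> with witnesses that omits \<open>F\<close> and is \<open>\<omega>\<close>-complete. The rejection step needs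
  the rule "from \<open>A(c) \<or> e\<close> for every \<open>c\<close> infer \<open>\<forall>x A \<or> e\<close>", obtained from the \<open>\<omega>\<close>-rule and the
  axiom \<open>\<exists>x (A \<longrightarrow> \<forall>x A)\<close>. The sentences whose double negation lies in \<open>here\<close> form a complete
  theory \<open>there\<close>, and the atoms of \<open>here\<close> and \<open>there\<close> define a standard HT-interpretation in
  which exactly the members of \<open>here\<close> hold; the axiom \<open>A \<or> (A \<longrightarrow> B) \<or> \<not> B\<close> gives the
  implication clause.
\<close>

section \<open>Substitution and satisfaction\<close>

lemma htsat_total: "htsat num T T env G = csat num T env G"
proof (induction G arbitrary: env)
  case (All x G) then show ?case by (cases x) (simp_all only: htsat.simps csat.simps)
next
  case (Ex x G) then show ?case by (cases x) (simp_all only: htsat.simps csat.simps)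
qed simp_all

lemma eval_cong: "(\<And>v. v \<in> fvt t \<Longrightarrow> e v = e' v) \<Longrightarrow> eval num e t = eval num e' t"
  by (induction t) auto

lemma map_eval_cong:
  "(\<And>v. v \<in> \<Union> (fvt ` set ts) \<Longrightarrow> e v = e' v) \<Longrightarrow> map (eval num e) ts = map (eval num e') ts"
  by (auto intro: eval_cong)

lemma htsat_cong: "(\<And>v. v \<in> fv F \<Longrightarrow> e v = e' v) \<Longrightarrow> htsat num H T e F = htsat num H T e' F"
proof (induction F arbitrary: e e' H)
  case (Imp F G)
  \<comment> \<open>the classical part of an implication is the instance \<open>H = T\<close>, hence \<open>arbitrary: H\<close>\<close>
  have "htsat num H' T e F = htsat num H' T e' F" "htsat num H' T e G = htsat num H' T e' G" for H'
    by (rule Imp.IH; use Imp.prems in simp)+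
  moreover from this[of T] have "csat num T e F = csat num T e' F" "csat num T e G = csat num T e' G"
    by (simp_all only: htsat_total)
  ultimately show ?case by simp
next
  case (All x F)
  have "htsat num H T (e(x := d)) F = htsat num H T (e'(x := d)) F" for d
    by (rule All.IH) (use All.prems in auto)
  then show ?case by (cases x) simp_all
next
  case (Ex x F)
  have "htsat num H T (e(x := d)) F = htsat num H T (e'(x := d)) F" for d
    by (rule Ex.IH) (use Ex.prems in auto)
  then show ?case by (cases x) simp_all
next
  case (And F G)
  have "htsat num H T e F = htsat num H T e' F" "htsat num H T e G = htsat num H T e' G"
    by (rule And.IH; use And.prems in simp)+
  then show ?case by simp
next
  case (Or F G)
  have "htsat num H T e F = htsat num H T e' F" "htsat num H T e G = htsat num H T e' G"
    by (rule Or.IH; use Or.prems in simp)+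
  then show ?case by simp
next
  case (Pred p ts)
  then have "map (eval num e) ts = map (eval num e') ts" by (intro map_eval_cong) simp
  then show ?case by (simp only: htsat.simps)
next
  case (AtLeast X V A ts)
  then have "map (eval num e) ts = map (eval num e') ts" by (intro map_eval_cong) simp
  then show ?case by (simp only: htsat.simps)
next
  case (AtMost X V A ts)
  then have "map (eval num e) ts = map (eval num e') ts" by (intro map_eval_cong) simp
  then show ?case by (simp only: htsat.simps)
next
  case (Cmp c a b) then show ?case using eval_cong[of a e e'] eval_cong[of b e e'] by simp
next
  case (Eq a b) then show ?case using eval_cong[of a e e'] eval_cong[of b e e'] by simp
qed simp

lemma csat_cong: "(\<And>v. v \<in> fv F \<Longrightarrow> e v = e' v) \<Longrightarrow> csat num T e F = csat num T e' F"
  using htsat_cong[of F e e' num T T] by (simp add: htsat_total)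

lemma eval_substt: "eval num env (substt s t) = eval num (\<lambda>v. eval num env (s v)) t"
  by (induction t) auto

lemma eval_subst_upd:
  assumes "\<forall>y\<in>fv F - {x}. x \<notin> fvt (s y)" and "v \<in> fv F"
  shows "eval num (env(x := d)) ((s(x := Var x)) v) = ((\<lambda>v. eval num env (s v))(x := d)) v"
  using assms by (cases "v = x") (auto intro!: eval_cong)

lemma htsat_subst:
  "substok s F \<Longrightarrow> htsat num H T env (subst s F) = htsat num H T (\<lambda>v. eval num env (s v)) F"
proof (induction F arbitrary: s env H)
  case (Imp F G)
  have ht: "htsat num H' T env (subst s A) = htsat num H' T (\<lambda>v. eval num env (s v)) A"
    if "A \<in> {F, G}" for H' A
    using that Imp by auto
  have "csat num T env (subst s A) = csat num T (\<lambda>v. eval num env (s v)) A" if "A \<in> {F, G}" for A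
    using ht[OF that, of T] by (simp only: htsat_total)
  with ht show ?case by simp
next
  case (All x F)
  have "htsat num H T (env(x := d)) (subst (s(x := Var x)) F)
      = htsat num H T ((\<lambda>v. eval num env (s v))(x := d)) F" for d
    using All.prems by (subst All.IH) (auto intro!: htsat_cong eval_subst_upd simp del: fun_upd_apply)
  then show ?case by (cases x) simp_all
next
  case (Ex x F)
  have "htsat num H T (env(x := d)) (subst (s(x := Var x)) F)
      = htsat num H T ((\<lambda>v. eval num env (s v))(x := d)) F" for d
    using Ex.prems by (subst Ex.IH) (auto intro!: htsat_cong eval_subst_upd simp del: fun_upd_apply)
  then show ?case by (cases x) simp_all
qed (simp_all add: eval_substt comp_def)

lemma htsat_sub1:
  "sub1ok x t F \<Longrightarrow> htsat num H T env (sub1 x t F) = htsat num H T (env(x := eval num env t)) F"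
  unfolding sub1_def sub1ok_def by (subst htsat_subst) (auto intro!: htsat_cong)

lemma substok_if_fvt_subset: "(\<forall>v. fvt (s v) \<subseteq> {v}) \<Longrightarrow> substok s F"
proof (induction F arbitrary: s)
  case (All x F)
  have "\<forall>v. fvt ((s(x := Var x)) v) \<subseteq> {v}" using All.prems by auto
  then show ?case using All by auto
next
  case (Ex x F)
  have "\<forall>v. fvt ((s(x := Var x)) v) \<subseteq> {v}" using Ex.prems by auto
  then show ?case using Ex by auto
qed auto

lemma sub1ok_Cst [simp]: "sub1ok x (Cst c) F"
  unfolding sub1ok_def by (rule substok_if_fvt_subset) auto

lemma sub1ok_Var [simp]: "sub1ok x (Var x) F"
  unfolding sub1ok_def by (rule substok_if_fvt_subset) auto

lemma substt_id: "(\<And>v. v \<in> fvt t \<Longrightarrow> s v = Var v) \<Longrightarrow> substt s t = t"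
  by (induction t) auto

lemma substt_closed: "fvt u = {} \<Longrightarrow> substt s u = u"
  by (rule substt_id) auto

lemma subst_id: "(\<And>v. v \<in> fv F \<Longrightarrow> s v = Var v) \<Longrightarrow> subst s F = F"
  by (induction F arbitrary: s) (auto intro!: map_idI substt_id)

lemma sub1_Var [simp]: "sub1 x (Var x) F = F"
  unfolding sub1_def by (rule subst_id) auto

lemma sub1_not_free: "x \<notin> fv F \<Longrightarrow> sub1 x t F = F"
  unfolding sub1_def by (rule subst_id) auto

lemma sub1_simps [simp]:
  "sub1 x t Bot = Bot"
  "sub1 x t (Neg F) = Neg (sub1 x t F)"
  "sub1 x t (And F G) = And (sub1 x t F) (sub1 x t G)"
  "sub1 x t (Or F G) = Or (sub1 x t F) (sub1 x t G)"
  "sub1 x t (Imp F G) = Imp (sub1 x t F) (sub1 x t G)"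
  "sub1 x t (Eq a b) = Eq (substt ((\<lambda>v. Var v)(x := t)) a) (substt ((\<lambda>v. Var v)(x := t)) b)"
  by (simp_all add: sub1_def Neg_def)

lemma fvt_substt: "fvt (substt s t) = (\<Union>v\<in>fvt t. fvt (s v))"
  by (induction t) auto

lemma fv_subst: "fv (subst s F) \<subseteq> (\<Union>v\<in>fv F. fvt (s v))"
proof (induction F arbitrary: s)
  case (All x F)
  have *: "fv (subst (s(x := Var x)) F) \<subseteq> (\<Union>v\<in>fv F. fvt ((s(x := Var x)) v))" by (rule All)
  show ?case
  proof
    fix y assume "y \<in> fv (subst s (All x F))"
    then have y: "y \<in> fv (subst (s(x:=Var x)) F)" "y \<noteq> x" by auto
    then obtain v where "v\<in>fv F" "y \<in> fvt ((s(x:=Var x)) v)" using * by blast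
    then show "y \<in> (\<Union>v\<in>fv (All x F). fvt (s v))" using y by (cases "v = x") auto
  qed
next
  case (Ex x F)
  have *: "fv (subst (s(x := Var x)) F) \<subseteq> (\<Union>v\<in>fv F. fvt ((s(x := Var x)) v))" by (rule Ex)
  show ?case
  proof
    fix y assume "y \<in> fv (subst s (Ex x F))"
    then have y: "y \<in> fv (subst (s(x:=Var x)) F)" "y \<noteq> x" by auto
    then obtain v where "v\<in>fv F" "y \<in> fvt ((s(x:=Var x)) v)" using * by blast
    then show "y \<in> (\<Union>v\<in>fv (Ex x F). fvt (s v))" using y by (cases "v = x") auto
  qed
next
  case (And F G)
  have "fv (subst s F) \<subseteq> (\<Union>v\<in>fv F. fvt (s v))" "fv (subst s G) \<subseteq> (\<Union>v\<in>fv G. fvt (s v))"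
    by (rule And.IH)+
  then show ?case by auto
next
  case (Or F G)
  have "fv (subst s F) \<subseteq> (\<Union>v\<in>fv F. fvt (s v))" "fv (subst s G) \<subseteq> (\<Union>v\<in>fv G. fvt (s v))"
    by (rule Or.IH)+
  then show ?case by auto
next
  case (Imp F G)
  have "fv (subst s F) \<subseteq> (\<Union>v\<in>fv F. fvt (s v))" "fv (subst s G) \<subseteq> (\<Union>v\<in>fv G. fvt (s v))"
    by (rule Imp.IH)+
  then show ?case by auto
qed (auto simp: fvt_substt)

lemma fv_sub1_Cst: "fv (sub1 x (Cst c) F) \<subseteq> fv F - {x}"
  using fv_subst[of "(\<lambda>v. Var v)(x := Cst c)" F] unfolding sub1_def
  by (auto split: if_splits)

definition wf_substitution :: "(int \<Rightarrow> 'c) \<Rightarrow> (var \<Rightarrow> 'c trm) \<Rightarrow> bool" where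
  "wf_substitution num s = (\<forall>v. wf_trm num (s v) \<and> (is_int num (Var v) \<longrightarrow> is_int num (s v)))"

lemma wf_substitution_upd: "wf_substitution num s \<Longrightarrow> wf_substitution num (s(x := Var x))"
  by (simp add: wf_substitution_def)

lemma is_int_substt: "wf_substitution num s \<Longrightarrow> is_int num t \<Longrightarrow> is_int num (substt s t)"
  by (induction t) (auto simp: wf_substitution_def)

lemma wf_trm_substt: "wf_substitution num s \<Longrightarrow> wf_trm num t \<Longrightarrow> wf_trm num (substt s t)"
  by (induction t) (auto intro: is_int_substt simp: wf_substitution_def)

lemma wf_subst: "wf_substitution num s \<Longrightarrow> wf num F \<Longrightarrow> wf num (subst s F)"
  by (induction F arbitrary: s) (auto simp: list_all_iff intro: wf_trm_substt wf_substitution_upd)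

lemma is_int_wf_trm: "is_int num t \<Longrightarrow> wf_trm num t"
  by (induction t rule: is_int.induct) auto

lemma sort_ok_wf_trm: "sort_ok num x t \<Longrightarrow> wf_trm num t \<and> (is_int num (Var x) \<longrightarrow> is_int num t)"
  by (cases x) (auto intro: is_int_wf_trm)

lemma wf_sub1: "sort_ok num x t \<Longrightarrow> wf num F \<Longrightarrow> wf num (sub1 x t F)"
  unfolding sub1_def using sort_ok_wf_trm[of num x t]
  by (intro wf_subst) (auto simp: wf_substitution_def)

lemma sentence_sub1:
  "sort_ok num x (Cst c) \<Longrightarrow> wf num F \<Longrightarrow> fv F \<subseteq> {x} \<Longrightarrow> sentence num (sub1 x (Cst c) F)"
  unfolding sentence_def using wf_sub1[of num x "Cst c" F] fv_sub1_Cst[of x c F] by auto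

lemma fv_Neg [simp]: "fv (Neg F) = fv F" by (simp add: Neg_def)
lemma wf_Neg [simp]: "wf num (Neg F) = wf num F" by (simp add: Neg_def)

fun conn_size :: "('c,'p) form \<Rightarrow> nat" where
  "conn_size (And F G) = Suc (conn_size F + conn_size G)"
| "conn_size (Or F G) = Suc (conn_size F + conn_size G)"
| "conn_size (Imp F G) = Suc (conn_size F + conn_size G)"
| "conn_size (All x F) = Suc (conn_size F)"
| "conn_size (Ex x F) = Suc (conn_size F)"
| "conn_size _ = 1"

lemma conn_size_subst [simp]: "conn_size (subst s F) = conn_size F"
  by (induction F arbitrary: s) auto

lemma conn_size_sub1 [simp]: "conn_size (sub1 x t F) = conn_size F"
  by (simp add: sub1_def)

lemma htsat_persistent: "H \<subseteq> T \<Longrightarrow> htsat num H T env G \<Longrightarrow> csat num T env G"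
proof (induction G arbitrary: env)
  case (All x G) then show ?case by (cases x) auto
next
  case (Ex x G) then show ?case by (cases x) auto
qed auto

lemma htsat_std: "nopred G \<Longrightarrow> sigma0 G \<Longrightarrow> htsat num H T env G = csat num T env G"
proof (induction G arbitrary: env)
  case (All x G) then show ?case by (cases x) auto
next
  case (Ex x G) then show ?case by (cases x) auto
qed auto

lemma csat_std: "nopred G \<Longrightarrow> sigma0 G \<Longrightarrow> csat num T env G = csat num T' env G"
proof (induction G arbitrary: env)
  case (All x G) then show ?case by (cases x) auto
next
  case (Ex x G) then show ?case by (cases x) auto
qed auto

lemma htsat_sentence: "sentence num G \<Longrightarrow> htsat num H T env G = ht_models num H T G"
  unfolding ht_models_def by (rule htsat_cong) (simp add: sentence_def)

lemma htsat_upd_not_free: "x \<notin> fv G \<Longrightarrow> htsat num H T (env(x := d)) G = htsat num H T env G"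
  by (rule htsat_cong) auto

lemma htsat_All_Cst:
  "htsat num H T env (All x A) \<longleftrightarrow> (\<forall>c. sort_ok num x (Cst c) \<longrightarrow> htsat num H T env (sub1 x (Cst c) A))"
  by (cases x) (auto simp: htsat_sub1)

lemma htsat_Ex_Cst:
  "htsat num H T env (Ex x A) \<longleftrightarrow> (\<exists>c. sort_ok num x (Cst c) \<and> htsat num H T env (sub1 x (Cst c) A))"
  by (cases x) (auto simp: htsat_sub1)

lemma csat_sentence: "sentence num G \<Longrightarrow> csat num T env G = csat num T (env0 num) G"
  by (rule csat_cong) (simp add: sentence_def)

section \<open>The counting axioms are sentences\<close>

lemma fv_alls: "fv (alls vs B) = fv B - set vs"
  by (induction vs) (auto simp: alls_def)
lemma wf_alls: "wf num (alls vs B) = wf num B"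
  by (induction vs) (auto simp: alls_def)
lemma fv_exs: "fv (exs vs B) = fv B - set vs"
  by (induction vs) (auto simp: exs_def)
lemma wf_exs: "wf num (exs vs B) = wf num B"
  by (induction vs) (auto simp: exs_def)

lemma fv_conjl: "fv (conjl Bs) \<subseteq> (\<Union>B\<in>set Bs. fv B)"
  by (induction Bs rule: conjl.induct) (auto simp: Top_def Neg_def)
lemma wf_conjl: "\<forall>B\<in>set Bs. wf num B \<Longrightarrow> wf num (conjl Bs)"
  by (induction Bs rule: conjl.induct) (auto simp: Top_def Neg_def)
lemma fv_disjl: "fv (disjl Bs) \<subseteq> (\<Union>B\<in>set Bs. fv B)"
  by (induction Bs rule: disjl.induct) auto
lemma wf_disjl: "\<forall>B\<in>set Bs. wf num B \<Longrightarrow> wf num (disjl Bs)"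
  by (induction Bs rule: disjl.induct) auto

lemma fv_Iff: "fv (Iff A B) = fv A \<union> fv B" by (auto simp: Iff_def)
lemma wf_Iff: "wf num (Iff A B) = (wf num A \<and> wf num B)" by (auto simp: Iff_def)
lemma fv_Top [simp]: "fv Top = {}" by (simp add: Top_def Neg_def)
lemma wf_Top [simp]: "wf num Top" by (simp add: Top_def Neg_def)

lemma fv_eqsl: "fv (eqsl Y Z :: ('c,'p) form) \<subseteq> GV ` (set Y \<union> set Z)"
proof -
  have "fv (eqsl Y Z :: ('c,'p) form) \<subseteq> (\<Union>B\<in>set (map2 (\<lambda>a b. Eq (Var (GV a)) (Var (GV b)) :: ('c,'p) form) Y Z). fv B)"
    unfolding eqsl_def by (rule fv_conjl)
  also have "\<dots> \<subseteq> GV ` (set Y \<union> set Z)"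
    by (force dest: set_zip_leftD set_zip_rightD)
  finally show ?thesis .
qed

lemma wf_eqsl: "wf num (eqsl Y Z)"
  unfolding eqsl_def by (rule wf_conjl) auto

lemma pairs_lt: "(i, j) \<in> set (pairs n) \<Longrightarrow> i < n \<and> j < n"
  by (auto simp: pairs_def)

definition ren_subst :: "nat list \<Rightarrow> nat list \<Rightarrow> var \<Rightarrow> 'c trm" where
  "ren_subst X Y = (\<lambda>v. case map_of (zip (map GV X) (map (\<lambda>y. Var (GV y)) Y)) v of
       None \<Rightarrow> Var v | Some t \<Rightarrow> t)"

lemma ren_eq_subst: "ren X Y F = subst (ren_subst X Y) F" by (simp add: ren_def ren_subst_def)

lemma ren_subst_cases: "(ren_subst X Y v :: 'c trm) = Var v \<or> (\<exists>y\<in>set Y. (ren_subst X Y v :: 'c trm) = Var (GV y))"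
proof (cases "map_of (zip (map GV X) (map (\<lambda>y. Var (GV y) :: 'c trm) Y)) v")
  case (Some t)
  then have "(v, t) \<in> set (zip (map GV X) (map (\<lambda>y. Var (GV y) :: 'c trm) Y))" by (rule map_of_SomeD)
  then have "t \<in> set (map (\<lambda>y. Var (GV y) :: 'c trm) Y)" by (rule set_zip_rightD)
  then show ?thesis using Some by (auto simp: ren_subst_def)
qed (simp add: ren_subst_def)

lemma ren_subst_IV: "(ren_subst X Y (IV n) :: 'c trm) = Var (IV n)"
proof (cases "map_of (zip (map GV X) (map (\<lambda>y. Var (GV y) :: 'c trm) Y)) (IV n)")
  case (Some t)
  then have "(IV n, t) \<in> set (zip (map GV X) (map (\<lambda>y. Var (GV y) :: 'c trm) Y))" by (rule map_of_SomeD)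
  then have "IV n \<in> set (map GV X)" by (rule set_zip_leftD)
  then show ?thesis by auto
qed (simp add: ren_subst_def)

lemma ren_subst_mem:
  "length Y = length X \<Longrightarrow> x \<in> set X \<Longrightarrow> \<exists>y\<in>set Y. (ren_subst X Y (GV x) :: 'c trm) = Var (GV y)"
proof -
  assume l: "length Y = length X" and x: "x \<in> set X"
  have "map_of (zip (map GV X) (map (\<lambda>y. Var (GV y) :: 'c trm) Y)) (GV x) \<noteq> None"
    using l x by simp
  then obtain t where t: "map_of (zip (map GV X) (map (\<lambda>y. Var (GV y) :: 'c trm) Y)) (GV x) = Some t" by auto
  then have "(GV x, t) \<in> set (zip (map GV X) (map (\<lambda>y. Var (GV y)) Y))" by (rule map_of_SomeD)
  then have "t \<in> set (map (\<lambda>y. Var (GV y)) Y)" by (rule set_zip_rightD)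
  then show ?thesis using t by (auto simp: ren_subst_def)
qed

lemma wf_ren:
  fixes num :: "int \<Rightarrow> 'c" and F :: "('c,'p) form"
  shows "wf num F \<Longrightarrow> wf num (ren X Y F)"
  unfolding ren_eq_subst
proof (rule wf_subst)
  show "wf_substitution num (ren_subst X Y)"
    unfolding wf_substitution_def
  proof
    fix v
    show "wf_trm num (ren_subst X Y v) \<and> (is_int num (Var v) \<longrightarrow> is_int num (ren_subst X Y v))"
      using ren_subst_cases[of X Y v, where 'c = 'c] by (cases v) (auto simp: ren_subst_IV)
  qed
qed

lemma fv_ren:
  fixes F :: "('c,'p) form"
  assumes l: "length Y = length X" and f: "fv F \<subseteq> GV ` (set X \<union> set V)"
  shows "fv (ren X Y F) \<subseteq> GV ` (set Y \<union> set V)"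
proof -
  have "fv (ren X Y F) \<subseteq> (\<Union>v\<in>fv F. fvt (ren_subst X Y v :: 'c trm))" unfolding ren_eq_subst by (rule fv_subst)
  also have "\<dots> \<subseteq> GV ` (set Y \<union> set V)"
  proof
    fix w assume "w \<in> (\<Union>v\<in>fv F. fvt (ren_subst X Y v :: 'c trm))"
    then obtain v where v: "v \<in> fv F" "w \<in> fvt (ren_subst X Y v :: 'c trm)" by blast
    then obtain z where z: "v = GV z" "z \<in> set X \<union> set V" using f by auto
    show "w \<in> GV ` (set Y \<union> set V)"
    proof (cases "z \<in> set X")
      case True
      then obtain y where "y \<in> set Y" "(ren_subst X Y (GV z) :: 'c trm) = Var (GV y)" using ren_subst_mem[OF l] by blast
      then show ?thesis using v z by auto
    next
      case False
      then have "z \<in> set V" using z by auto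
      then show ?thesis using ren_subst_cases[of X Y v, where 'c='c] v z by auto
    qed
  qed
  finally show ?thesis .
qed

lemma fv_ren_copies:
  assumes "\<forall>Y\<in>set Ys. length Y = length X" and "fv F \<subseteq> GV ` (set X \<union> set V)"
  shows "fv (conjl (map (\<lambda>Y. ren X Y F) Ys)) \<subseteq> GV ` (set (concat Ys) \<union> set V)"
proof -
  have "fv (ren X Y F) \<subseteq> GV ` (set (concat Ys) \<union> set V)" if "Y \<in> set Ys" for Y
    using fv_ren[of Y X F V] assms that by fastforce
  then show ?thesis using fv_conjl[of "map (\<lambda>Y. ren X Y F) Ys"] by fastforce
qed

lemma fv_eqsl_pairs:
  "(i, j) \<in> set (pairs (length Ys)) \<Longrightarrow> fv (eqsl (Ys ! i) (Ys ! j)) \<subseteq> GV ` set (concat Ys)"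
  using fv_eqsl[of "Ys ! i" "Ys ! j"] pairs_lt[of i j "length Ys"] by fastforce

lemma wf_fv_exge:
  fixes F :: "('c,'p) form"
  assumes "fresh X V F Ys" and "sym_ok num X V F"
  shows "wf num (exge X F Ys) \<and> fv (exge X F Ys) \<subseteq> GV ` set V"
proof -
  let ?B1 = "conjl (map (\<lambda>Y. ren X Y F) Ys)"
  let ?B2 = "conjl (map (\<lambda>(i,j). Neg (eqsl (Ys ! i) (Ys ! j) :: ('c,'p) form)) (pairs (length Ys)))"
  have "fv ?B1 \<subseteq> GV ` (set (concat Ys) \<union> set V)"
    using assms by (intro fv_ren_copies) (auto simp: fresh_def sym_ok_def)
  moreover have "fv ?B2 \<subseteq> GV ` set (concat Ys)"
    using fv_conjl[of "map (\<lambda>(i,j). Neg (eqsl (Ys ! i) (Ys ! j) :: ('c,'p) form)) (pairs (length Ys))"]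
      fv_eqsl_pairs by fastforce
  moreover have "wf num ?B1" "wf num ?B2"
    using assms by (auto intro!: wf_conjl wf_ren simp: wf_eqsl sym_ok_def)
  ultimately have "fv ?B1 \<union> fv ?B2 - GV ` set (concat Ys) \<subseteq> GV ` set V"
    and "wf num ?B1 \<and> wf num ?B2" by blast+
  then show ?thesis by (simp add: exge_def wf_exs fv_exs)
qed

lemma wf_fv_exle:
  fixes F :: "('c,'p) form"
  assumes "fresh X V F Ys" and "sym_ok num X V F"
  shows "wf num (exle X F Ys) \<and> fv (exle X F Ys) \<subseteq> GV ` set V"
proof -
  let ?B1 = "conjl (map (\<lambda>Y. ren X Y F) Ys)"
  let ?B2 = "disjl (map (\<lambda>(i,j). eqsl (Ys ! i) (Ys ! j) :: ('c,'p) form) (pairs (length Ys)))"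
  have "fv ?B1 \<subseteq> GV ` (set (concat Ys) \<union> set V)"
    using assms by (intro fv_ren_copies) (auto simp: fresh_def sym_ok_def)
  moreover have "fv ?B2 \<subseteq> GV ` set (concat Ys)"
    using fv_disjl[of "map (\<lambda>(i,j). eqsl (Ys ! i) (Ys ! j) :: ('c,'p) form) (pairs (length Ys))"]
      fv_eqsl_pairs by fastforce
  moreover have "wf num ?B1" "wf num ?B2"
    using assms by (auto intro!: wf_conjl wf_disjl wf_ren simp: wf_eqsl sym_ok_def)
  ultimately have "fv ?B1 \<union> fv ?B2 - GV ` set (concat Ys) \<subseteq> GV ` set V"
    and "wf num ?B1 \<and> wf num ?B2" by blast+
  then show ?thesis by (simp add: exle_def wf_alls fv_alls)
qed

lemma wf_fv_counting_atoms:
  assumes "sym_ok num X V F" and "ts = map (\<lambda>v. Var (GV v)) V @ [Cst r]"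
  shows "wf num (AtLeast X V F ts) \<and> fv (AtLeast X V F ts) = GV ` set V"
    and "wf num (AtMost X V F ts) \<and> fv (AtMost X V F ts) = GV ` set V"
  using assms by (auto simp: sym_ok_def list_all_iff)

lemma DefsAx_sentence:
  fixes num :: "int \<Rightarrow> 'c::linorder" and G :: "('c,'p) form"
  assumes "G \<in> DefsAx num"
  shows "sentence num G"
proof -
  from assms obtain X V F where s: "sym_ok num X V F" and ax: "atleast_ax num X V F G \<or> atmost_ax num X V F G"
    by (auto simp: DefsAx_def)
  have fin: "sentence num (alls (map GV V) (Iff A B))"
    if "wf num A" "wf num B" "fv A \<subseteq> GV ` set V" "fv B \<subseteq> GV ` set V" for A B :: "('c,'p) form"
    using that by (auto simp: sentence_def wf_alls fv_alls wf_Iff fv_Iff)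
  from ax show ?thesis
  proof
    assume "atleast_ax num X V F G"
    then show ?thesis unfolding atleast_ax_def Let_def
      using fin wf_fv_counting_atoms(1)[OF s refl] wf_fv_exge[OF _ s] by (auto simp: Neg_def)
  next
    assume "atmost_ax num X V F G"
    then show ?thesis unfolding atmost_ax_def Let_def
      using fin wf_fv_counting_atoms(2)[OF s refl] wf_fv_exle[OF _ s] by (auto simp: Neg_def)
  qed
qed

section \<open>Soundness\<close>

lemma htsat_HT_axiom: "H \<subseteq> T \<Longrightarrow> htsat num H T env (Or A (Or (Imp A B) (Neg B)))"
  using htsat_persistent[of H T num env A] htsat_persistent[of H T num env B] by (auto simp: Neg_def)

lemma htsat_SQ_axiom:
  assumes "H \<subseteq> T"
  shows "htsat num H T env (Ex (GV n) (Imp A (All (GV n) A)))"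
proof -
  let ?e = "\<lambda>d. env(GV n := d)"
  have "\<exists>d. (htsat num H T (?e d) A \<longrightarrow> (\<forall>d'. htsat num H T (?e d') A))
          \<and> (csat num T (?e d) A \<longrightarrow> (\<forall>d'. csat num T (?e d') A))"
  proof (cases "\<forall>d. csat num T (?e d) A")
    case True
    then show ?thesis by (cases "\<forall>d. htsat num H T (?e d) A") auto
  next
    case False
    then obtain d where "\<not> csat num T (?e d) A" by blast
    then show ?thesis using htsat_persistent[OF assms, of num "?e d" A] by blast
  qed
  then show ?thesis by simp
qed

definition int_env :: "(int \<Rightarrow> 'c) \<Rightarrow> (var \<Rightarrow> 'c) \<Rightarrow> bool" where
  "int_env num env = (\<forall>n. env (IV n) \<in> range num)"

lemma eval_int_env: "int_env num env \<Longrightarrow> is_int num t \<Longrightarrow> eval num env t \<in> range num"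
proof (induction t)
  case (Var v) then show ?case by (cases v) (auto simp: int_env_def)
qed auto

lemma int_env_upd: "int_env num env \<Longrightarrow> int_env num (env(GV n := d))"
  "int_env num env \<Longrightarrow> int_env num (env(IV n := num k))"
  "int_env num (env0 num)"
  by (auto simp: int_env_def env0_def)

locale ht_calculus =
  fixes num :: "int \<Rightarrow> 'c::{linorder,countable}" and Gam :: "('c,'p::countable) form set"
  assumes num_strict_mono: "strict_mono num"
    and Gam_sentences: "\<forall>G\<in>Gam. sentence num G"
begin

abbreviation prv :: "('c,'p) form set \<Rightarrow> ('c,'p) form \<Rightarrow> bool" where
  "prv D F \<equiv> deriv num Gam D F"

definition ht_entails :: "('c,'p) form set \<Rightarrow> ('c,'p) form \<Rightarrow> bool" where
  "ht_entails D F = (\<forall>H T env. standard_ht num H T \<longrightarrow> (\<forall>G\<in>Gam. ht_models num H T G)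
     \<longrightarrow> int_env num env \<longrightarrow> (\<forall>G\<in>D. htsat num H T env G) \<longrightarrow> htsat num H T env F)"

lemma ht_entailsI:
  "(\<And>H T env. standard_ht num H T \<Longrightarrow> \<forall>G\<in>Gam. ht_models num H T G \<Longrightarrow> int_env num env
     \<Longrightarrow> \<forall>G\<in>D. htsat num H T env G \<Longrightarrow> htsat num H T env F) \<Longrightarrow> ht_entails D F"
  by (auto simp: ht_entails_def)

lemma ht_entailsD:
  "ht_entails D F \<Longrightarrow> standard_ht num H T \<Longrightarrow> \<forall>G\<in>Gam. ht_models num H T G \<Longrightarrow> int_env num env
     \<Longrightarrow> \<forall>G\<in>D. htsat num H T env G \<Longrightarrow> htsat num H T env F"
  by (auto simp: ht_entails_def)

lemma standard_ht_total:
  assumes "standard_ht num H T" and "\<forall>G\<in>Gam. ht_models num H T G"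
  shows "standard_ht num T T" and "\<forall>G\<in>Gam. ht_models num T T G"
  using assms htsat_persistent[of H T num]
  by (auto simp: standard_ht_def ht_models_def htsat_total)

lemma htsat_Axioms:
  assumes "F \<in> Axioms num \<union> Gam" and "standard_ht num H T" and "\<forall>G\<in>Gam. ht_models num H T G"
  shows "htsat num H T env F"
proof -
  have HT: "H \<subseteq> T" using assms(2) by (simp add: standard_ht_def)
  consider "F \<in> Gam" | "F \<in> HTAx num" | "F \<in> SQAx num" | "F \<in> StdAx num" | "F \<in> DefsAx num"
    using assms(1) by (auto simp: Axioms_def)
  then show ?thesis
  proof cases
    case 1
    then show ?thesis using assms(3) Gam_sentences htsat_sentence by blast
  next
    case 2
    then show ?thesis using htsat_HT_axiom[OF HT] by (auto simp: HTAx_def)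
  next
    case 3
    then show ?thesis using htsat_SQ_axiom[OF HT] by (auto simp: SQAx_def)
  next
    case 4
    then show ?thesis
      using csat_std[of F num "{}" "env0 num" T] csat_sentence[of num F T env] htsat_std[of F num H T env]
      by (simp add: StdAx_def)
  next
    case 5
    then have "ht_models num H T F" using assms(2) by (simp add: standard_ht_def)
    then show ?thesis using htsat_sentence[OF DefsAx_sentence[OF 5]] by simp
  qed
qed

lemma ht_entails_impI:
  assumes "ht_entails (insert F D) G"
  shows "ht_entails D (Imp F G)"
proof (rule ht_entailsI)
  fix H T env
  assume std: "standard_ht num H T" and Gam: "\<forall>G\<in>Gam. ht_models num H T G"
    and env: "int_env num env" and D: "\<forall>G\<in>D. htsat num H T env G"
  have "H \<subseteq> T" using std by (simp add: standard_ht_def)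
  then have "\<forall>G\<in>D. htsat num T T env G" using D by (auto simp: htsat_total intro: htsat_persistent)
  then have "csat num T env F \<longrightarrow> csat num T env G"
    using ht_entailsD[OF assms standard_ht_total[OF std Gam] env] by (auto simp: htsat_total)
  moreover have "htsat num H T env F \<longrightarrow> htsat num H T env G"
    using ht_entailsD[OF assms std Gam env] D by auto
  ultimately show "htsat num H T env (Imp F G)" by simp
qed

lemma ht_entails_allI:
  assumes "ht_entails D F" and "x \<notin> fvs D"
  shows "ht_entails D (All x F)"
proof (rule ht_entailsI)
  fix H T env
  assume std: "standard_ht num H T" and Gam: "\<forall>G\<in>Gam. ht_models num H T G"
    and env: "int_env num env" and D: "\<forall>G\<in>D. htsat num H T env G"
  have "htsat num H T (env(x := d)) G" if "G \<in> D" for G d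
    using D that assms(2) htsat_upd_not_free[of x G] by (auto simp: fvs_def)
  then have "htsat num H T (env(x := d)) F" if "int_env num (env(x := d))" for d
    using ht_entailsD[OF assms(1) std Gam that] by blast
  then show "htsat num H T env (All x F)"
    using int_env_upd(1,2)[OF env] by (cases x) auto
qed

lemma ht_entails_allE:
  assumes "ht_entails D (All x F)" and "sort_ok num x t" and "sub1ok x t F"
  shows "ht_entails D (sub1 x t F)"
proof (rule ht_entailsI)
  fix H T env
  assume "standard_ht num H T" "\<forall>G\<in>Gam. ht_models num H T G" and env: "int_env num env"
    and "\<forall>G\<in>D. htsat num H T env G"
  then have "htsat num H T env (All x F)" using ht_entailsD[OF assms(1)] by blast
  then have "htsat num H T (env(x := eval num env t)) F"
    using eval_int_env[OF env, of t] assms(2) by (cases x) auto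
  then show "htsat num H T env (sub1 x t F)" using htsat_sub1[OF assms(3)] by simp
qed

lemma ht_entails_exI:
  assumes "ht_entails D (sub1 x t F)" and "sort_ok num x t" and "sub1ok x t F"
  shows "ht_entails D (Ex x F)"
proof (rule ht_entailsI)
  fix H T env
  assume "standard_ht num H T" "\<forall>G\<in>Gam. ht_models num H T G" and env: "int_env num env"
    and "\<forall>G\<in>D. htsat num H T env G"
  then have "htsat num H T (env(x := eval num env t)) F"
    using ht_entailsD[OF assms(1)] htsat_sub1[OF assms(3)] by simp
  then show "htsat num H T env (Ex x F)"
    using eval_int_env[OF env, of t] assms(2) by (cases x) auto
qed

lemma ht_entails_exE:
  assumes "ht_entails D (Ex x F)" and "ht_entails (insert F D) G" and "x \<notin> fvs D" and "x \<notin> fv G"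
  shows "ht_entails D G"
proof (rule ht_entailsI)
  fix H T env
  assume std: "standard_ht num H T" and Gam: "\<forall>G\<in>Gam. ht_models num H T G"
    and env: "int_env num env" and D: "\<forall>G\<in>D. htsat num H T env G"
  obtain d where d: "htsat num H T (env(x := d)) F" "int_env num (env(x := d))"
    using ht_entailsD[OF assms(1) std Gam env D] int_env_upd(1,2)[OF env] by (cases x) auto
  have "\<forall>G'\<in>D. htsat num H T (env(x := d)) G'"
    using D assms(3) by (auto simp: fvs_def htsat_upd_not_free)
  then have "htsat num H T (env(x := d)) G" using ht_entailsD[OF assms(2) std Gam d(2)] d(1) by blast
  then show "htsat num H T env G" using htsat_upd_not_free[OF assms(4)] by simp
qed

lemma ht_entails_eqSubst:
  assumes "ht_entails D (Eq t1 t2)" and "ht_entails D (sub1 x t1 F)"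
    and "sub1ok x t1 F" and "sub1ok x t2 F"
  shows "ht_entails D (sub1 x t2 F)"
  using assms htsat_sub1[OF assms(3)] htsat_sub1[OF assms(4)] unfolding ht_entails_def by auto

lemma ht_entails_omega:
  assumes "\<And>c. sort_ok num x (Cst c) \<Longrightarrow> ht_entails D (sub1 x (Cst c) F)"
  shows "ht_entails D (All x F)"
proof (rule ht_entailsI)
  fix H T env
  assume "standard_ht num H T" "\<forall>G\<in>Gam. ht_models num H T G" "int_env num env"
    "\<forall>G\<in>D. htsat num H T env G"
  from ht_entailsD[OF assms this]
  have "htsat num H T (env(x := c)) F" if "sort_ok num x (Cst c)" for c
    using that by (simp add: htsat_sub1)
  then show "htsat num H T env (All x F)" by (cases x) auto
qed

lemma ht_entails_deriv: "prv D F \<Longrightarrow> ht_entails D F"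
proof (induction rule: deriv.induct)
  case (axiom F D) then show ?case by (auto simp: ht_entails_def intro: htsat_Axioms)
next
  case (impI F D G) show ?case by (rule ht_entails_impI[OF impI.IH])
next
  case (allI D F x) show ?case by (rule ht_entails_allI[OF allI.IH allI.hyps(2)])
next
  case (allE D x F t) show ?case by (rule ht_entails_allE[OF allE.IH allE.hyps(2,3)])
next
  case (exI D x t F) show ?case by (rule ht_entails_exI[OF exI.IH exI.hyps(2,3)])
next
  case (exE D x F G) show ?case by (rule ht_entails_exE[OF exE.IH exE.hyps(3,4)])
next
  case (eqSubst D t1 t2 x F) show ?case by (rule ht_entails_eqSubst[OF eqSubst.IH eqSubst.hyps(3,4)])
next
  case (omegaG D n F) show ?case by (rule ht_entails_omega) (use omegaG.IH in blast)
next
  case (omegaI D n F) show ?case by (rule ht_entails_omega) (use omegaI.IH in auto)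
next
  case (weaken D F D') then show ?case unfolding ht_entails_def by blast
next
  case (botE D F) then show ?case unfolding ht_entails_def by (metis htsat.simps(1))
next
  case (orE D F G H) then show ?case by (simp add: ht_entails_def) blast
qed (auto simp: ht_entails_def)

theorem soundness:
  assumes "derivable num Gam F" and "standard_ht num H T" and "\<forall>G\<in>Gam. ht_models num H T G"
  shows "ht_models num H T F"
  using ht_entailsD[OF ht_entails_deriv[OF assms(1)[unfolded derivable_def]] assms(2,3) int_env_upd(3)]
  by (simp add: ht_models_def)

end

section \<open>Derived rules\<close>

definition wf_ctx :: "(int \<Rightarrow> 'c) \<Rightarrow> ('c,'p) form set \<Rightarrow> bool" where
  "wf_ctx num D = (finite D \<and> (\<forall>G\<in>D. wf num G))"

context ht_calculus
begin

lemma prv_wf: "prv D F \<Longrightarrow> wf_ctx num D \<and> wf num F"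
  by (induction rule: deriv.induct) (auto simp: wfseq_def wf_ctx_def)

lemma wfseqI: "wf_ctx num D \<Longrightarrow> wf num F \<Longrightarrow> wfseq num D F"
  by (simp add: wfseq_def wf_ctx_def)

lemma wf_ctx_insert: "wf_ctx num (insert F D) = (wf num F \<and> wf_ctx num D)"
  by (auto simp: wf_ctx_def)

lemma prv_assm: "F \<in> D \<Longrightarrow> wf_ctx num D \<Longrightarrow> prv D F"
  by (rule deriv.assm) (auto simp: wfseq_def wf_ctx_def)

lemma prv_axiom: "F \<in> Axioms num \<union> Gam \<Longrightarrow> wf num F \<Longrightarrow> wf_ctx num D \<Longrightarrow> prv D F"
  by (rule deriv.axiom) (auto simp: wfseqI)

lemma prv_weaken: "prv D F \<Longrightarrow> D \<subseteq> D' \<Longrightarrow> wf_ctx num D' \<Longrightarrow> prv D' F"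
  by (rule deriv.weaken) (auto dest: prv_wf simp: wfseqI)

lemma prv_andI: "prv D F \<Longrightarrow> prv D G \<Longrightarrow> prv D (And F G)"
  by (rule deriv.andI) (auto dest!: prv_wf simp: wfseqI)

lemma prv_andE1: "prv D (And F G) \<Longrightarrow> prv D F"
  by (rule deriv.andE1) (auto dest!: prv_wf simp: wfseqI)

lemma prv_andE2: "prv D (And F G) \<Longrightarrow> prv D G"
  by (rule deriv.andE2) (auto dest!: prv_wf simp: wfseqI)

lemma prv_orI1: "prv D F \<Longrightarrow> wf num G \<Longrightarrow> prv D (Or F G)"
  by (rule deriv.orI1) (auto dest!: prv_wf simp: wfseqI)

lemma prv_orI2: "prv D G \<Longrightarrow> wf num F \<Longrightarrow> prv D (Or F G)"
  by (rule deriv.orI2) (auto dest!: prv_wf simp: wfseqI)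

lemma prv_orE:
  assumes "prv D (Or F G)" "prv (insert F D) H" "prv (insert G D) H"
  shows "prv D H"
proof (rule deriv.orE[OF assms])
  show "wfseq num D H" using prv_wf[OF assms(1)] prv_wf[OF assms(2)] by (simp add: wfseqI)
qed

lemma prv_impI: "prv (insert F D) G \<Longrightarrow> prv D (Imp F G)"
  by (rule deriv.impI) (auto dest!: prv_wf simp: wfseqI wf_ctx_insert)

lemma prv_impE:
  assumes "prv D (Imp F G)" "prv D F"
  shows "prv D G"
proof (rule deriv.impE[OF assms(2,1)])
  show "wfseq num D G" using prv_wf[OF assms(1)] by (simp add: wfseqI)
qed

lemma prv_botE: "prv D Bot \<Longrightarrow> wf num F \<Longrightarrow> prv D F"
  by (rule deriv.botE) (auto dest!: prv_wf simp: wfseqI)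

lemma prv_negI: "prv (insert F D) Bot \<Longrightarrow> prv D (Neg F)"
  unfolding Neg_def by (rule prv_impI)

lemma prv_negE: "prv D (Neg F) \<Longrightarrow> prv D F \<Longrightarrow> prv D Bot"
  unfolding Neg_def by (rule prv_impE)

lemma prv_allE_Cst: "prv D (All x F) \<Longrightarrow> sort_ok num x (Cst c) \<Longrightarrow> prv D (sub1 x (Cst c) F)"
  by (rule deriv.allE) (auto dest!: prv_wf simp: wfseqI wf_sub1)

lemma prv_allE_self: "prv D (All x F) \<Longrightarrow> prv D F"
  using deriv.allE[of num Gam D x F "Var x"]
  by (cases x) (auto dest!: prv_wf simp: wfseqI)

lemma prv_exI_Cst: "prv D (sub1 x (Cst c) F) \<Longrightarrow> sort_ok num x (Cst c) \<Longrightarrow> wf num F \<Longrightarrow> prv D (Ex x F)"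
  by (rule deriv.exI) (auto dest!: prv_wf simp: wfseqI)

lemma prv_exE:
  assumes "prv D (Ex x F)" "prv (insert F D) G" "x \<notin> fvs D" "x \<notin> fv G"
  shows "prv D G"
proof (rule deriv.exE[OF assms])
  show "wfseq num D G" using prv_wf[OF assms(1)] prv_wf[OF assms(2)] by (simp add: wfseqI)
qed

lemma prv_omegaG: "(\<And>c. prv D (sub1 (GV n) (Cst c) F)) \<Longrightarrow> wf num F \<Longrightarrow> wf_ctx num D \<Longrightarrow> prv D (All (GV n) F)"
  by (rule deriv.omegaG) (auto simp: wfseqI)

lemma prv_omegaI: "(\<And>k. prv D (sub1 (IV n) (Cst (num k)) F)) \<Longrightarrow> wf num F \<Longrightarrow> wf_ctx num D \<Longrightarrow> prv D (All (IV n) F)"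
  by (rule deriv.omegaI) (auto simp: wfseqI)

lemma prv_eqRefl: "wf_ctx num D \<Longrightarrow> wf_trm num t \<Longrightarrow> prv D (Eq t t)"
  by (rule deriv.eqRefl) (auto simp: wfseqI)

lemma prv_omega: "(\<And>c. sort_ok num x (Cst c) \<Longrightarrow> prv D (sub1 x (Cst c) F)) \<Longrightarrow> wf num F \<Longrightarrow> wf_ctx num D \<Longrightarrow> prv D (All x F)"
  by (cases x) (auto intro!: prv_omegaG prv_omegaI)

end

fun disjs :: "('c,'p) form list \<Rightarrow> ('c,'p) form" where
  "disjs [] = Bot"
| "disjs (G # E) = Or G (disjs E)"

lemma wf_disjs: "\<forall>G\<in>set E. wf num G \<Longrightarrow> wf num (disjs E)"
  by (induction E) auto

lemma fv_disjs: "fv (disjs E) = (\<Union>G\<in>set E. fv G)"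
  by (induction E) auto

definition dneg :: "('c,'p) form \<Rightarrow> ('c,'p) form" where "dneg G = Neg (Neg G)"

text \<open>
  The axiom \<open>\<exists>X (A \<longrightarrow> \<forall>X A)\<close> is only available for general variables. An integer quantifier
  \<open>\<forall>N A\<close> is therefore replaced by \<open>\<forall>X (num_guard N A)\<close>, whose instances at non-numerals hold
  trivially.
\<close>

definition num_guard_at :: "nat \<Rightarrow> 'c \<Rightarrow> ('c,'p) form \<Rightarrow> ('c,'p) form" where
  "num_guard_at n c A = All (IV n) (Imp (Eq (Cst c) (Var (IV n))) A)"

definition num_guard :: "nat \<Rightarrow> ('c,'p) form \<Rightarrow> ('c,'p) form" where
  "num_guard n A = All (IV n) (Imp (Eq (Var (GV 0)) (Var (IV n))) A)"

lemma sub1_num_guard: "fv A \<subseteq> {IV n} \<Longrightarrow> sub1 (GV 0) (Cst c) (num_guard n A) = num_guard_at n c A"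
proof -
  assume a: "fv A \<subseteq> {IV n}"
  have "subst (((\<lambda>v. Var v)(GV 0 := Cst c))(IV n := Var (IV n))) A = A"
    by (rule subst_id) (use a in auto)
  then show ?thesis by (simp add: sub1_def num_guard_def num_guard_at_def)
qed

lemma sub1_num_guard_at_body: "fv A \<subseteq> {IV n} \<Longrightarrow>
   sub1 (IV n) (Cst d) (Imp (Eq (Cst c) (Var (IV n))) A) = Imp (Eq (Cst c) (Cst d)) (sub1 (IV n) (Cst d) A)"
  by (simp add: sub1_def)

lemma wf_num_guard: "wf num A \<Longrightarrow> wf num (num_guard n A)" by (simp add: num_guard_def)
lemma fv_num_guard: "fv A \<subseteq> {IV n} \<Longrightarrow> fv (num_guard n A) \<subseteq> {GV 0}" by (auto simp: num_guard_def)

context ht_calculus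
begin

lemma wf_ctx_sentences: "finite D \<Longrightarrow> \<forall>G\<in>D. sentence num G \<Longrightarrow> wf_ctx num D"
  by (simp add: wf_ctx_def sentence_def)

lemma fvs_sentences: "\<forall>G\<in>D. sentence num G \<Longrightarrow> fvs D = {}"
  by (simp add: fvs_def sentence_def)

lemma prv_disjsI: "G \<in> set E \<Longrightarrow> prv D G \<Longrightarrow> \<forall>G\<in>set E. wf num G \<Longrightarrow> prv D (disjs E)"
proof (induction E)
  case (Cons a E)
  show ?case
  proof (cases "G = a")
    case True then show ?thesis using Cons by (auto intro!: prv_orI1 wf_disjs)
  next
    case False then show ?thesis using Cons by (auto intro!: prv_orI2)
  qed
qed simp

lemma prv_weaken_insert: "prv D F \<Longrightarrow> wf_ctx num (insert G D) \<Longrightarrow> prv (insert G D) F"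
  by (erule prv_weaken) auto

lemma prv_wf_ctx: "prv D F \<Longrightarrow> wf_ctx num D" using prv_wf by blast

lemma prv_Ex_omega_assm:
  assumes S: "finite S" "\<forall>G\<in>S. sentence num G" and e: "sentence num e"
    and exS: "Ex x A \<in> S" and A: "wf num A"
    and all: "\<And>c. sort_ok num x (Cst c) \<Longrightarrow> prv (insert (sub1 x (Cst c) A) S) e"
  shows "prv S e"
proof -
  have wS: "wf_ctx num S" using S by (rule wf_ctx_sentences)
  have xe: "x \<notin> fv e" using e by (simp add: sentence_def)
  have "prv S (sub1 x (Cst c) (Imp A e))" if "sort_ok num x (Cst c)" for c
    using prv_impI[OF all[OF that]] sub1_not_free[OF xe] by simp
  then have al: "prv S (All x (Imp A e))"
    by (intro prv_omega) (use A e wS in \<open>auto simp: sentence_def\<close>)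
  have wSA: "wf_ctx num (insert A S)" using wS A by (simp add: wf_ctx_insert)
  have "prv (insert A S) e"
    by (rule prv_impE[OF prv_allE_self[OF prv_weaken[OF al _ wSA]] prv_assm]) (use wSA in auto)
  then show ?thesis
    by (rule prv_exE[OF prv_assm[OF exS wS]]) (use S xe fvs_sentences in auto)
qed

lemma prv_Or_cancel: "prv (insert G S) e \<Longrightarrow> prv S (Or G e) \<Longrightarrow> prv S e"
proof -
  assume a: "prv (insert G S) e" "prv S (Or G e)"
  have "wf_ctx num (insert e S)" using prv_wf[OF a(2)] by (simp add: wf_ctx_insert)
  then have "prv (insert e S) e" by (intro prv_assm) auto
  then show ?thesis by (rule prv_orE[OF a(2) a(1)])
qed

lemma SQ_Axioms: "wf num A \<Longrightarrow> Ex (GV n) (Imp A (All (GV n) A)) \<in> Axioms num"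
  by (auto simp: Axioms_def SQAx_def)

lemma HT_Axioms: "wf num A \<Longrightarrow> wf num B \<Longrightarrow> Or A (Or (Imp A B) (Neg B)) \<in> Axioms num"
  by (auto simp: Axioms_def HTAx_def)

text \<open>
  The \<open>\<omega>\<close>-rule only yields \<open>\<forall>x (A \<or> e)\<close>; the axiom \<open>\<exists>x (A \<longrightarrow> \<forall>x A)\<close> moves \<open>e\<close> out of the
  quantifier.
\<close>

lemma prv_All_Or_omegaG:
  assumes S: "finite S" "\<forall>G\<in>S. sentence num G" and e: "sentence num e"
    and A: "wf num A" "fv A \<subseteq> {GV n}"
    and all: "\<And>c. prv S (Or (sub1 (GV n) (Cst c) A) e)"
  shows "prv S (Or (All (GV n) A) e)"
proof -
  let ?x = "GV n"
  have wS: "wf_ctx num S" using S by (rule wf_ctx_sentences)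
  have xe: "?x \<notin> fv e" using e by (simp add: sentence_def)
  have we: "wf num e" using e by (simp add: sentence_def)
  have al: "prv S (All ?x (Or A e))"
    by (rule prv_omegaG) (use all sub1_not_free[OF xe] A we wS in auto)
  have sq: "prv S (Ex ?x (Imp A (All ?x A)))"
    by (rule prv_axiom) (use SQ_Axioms[OF A(1)] A wS in auto)
  let ?D1 = "insert (Imp A (All ?x A)) S"
  have w1: "wf_ctx num ?D1" using wS A by (simp add: wf_ctx_insert)
  have oe: "prv ?D1 (Or A e)" by (rule prv_allE_self[OF prv_weaken[OF al _ w1]]) auto
  have w2: "wf_ctx num (insert A ?D1)" "wf_ctx num (insert e ?D1)" using w1 A we by (auto simp: wf_ctx_insert)
  have c1: "prv (insert A ?D1) (Or (All ?x A) e)"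
    by (rule prv_orI1[OF prv_impE[OF prv_assm prv_assm]]) (use w2 we in auto)
  have c2: "prv (insert e ?D1) (Or (All ?x A) e)"
    by (rule prv_orI2[OF prv_assm]) (use w2 A in auto)
  have "prv ?D1 (Or (All ?x A) e)" by (rule prv_orE[OF oe c1 c2])
  then show ?thesis
    by (rule prv_exE[OF sq]) (use S xe fvs_sentences A in auto)
qed

lemma Std_Axioms: "sentence num G \<Longrightarrow> sigma0 G \<Longrightarrow> nopred G \<Longrightarrow> csat num {} (env0 num) G \<Longrightarrow> G \<in> Axioms num"
  by (auto simp: Axioms_def StdAx_def)

lemma num_inj: "num j = num k \<longleftrightarrow> j = k"
  using num_strict_mono strict_mono_eq by blast

lemma prv_num_guard_at:
  assumes wS: "wf_ctx num S" and A: "wf num A" "fv A \<subseteq> {IV n}"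
    and h: "\<And>k. c = num k \<Longrightarrow> prv S (sub1 (IV n) (Cst (num k)) A)"
  shows "prv S (num_guard_at n c A)"
  unfolding num_guard_at_def
proof (rule prv_omegaI)
  fix k
  let ?E = "Eq (Cst c) (Cst (num k))"
  have wE: "wf_ctx num (insert ?E S)" using wS by (simp add: wf_ctx_insert)
  have wA: "wf num (sub1 (IV n) (Cst (num k)) A)" using A by (simp add: wf_sub1)
  have "prv (insert ?E S) (sub1 (IV n) (Cst (num k)) A)"
  proof (cases "c = num k")
    case True then show ?thesis using h[OF True] wE by (auto intro: prv_weaken_insert)
  next
    case False
    have "Neg ?E \<in> Axioms num"
      by (rule Std_Axioms) (use False in \<open>auto simp: sentence_def Neg_def\<close>)
    then have "prv (insert ?E S) (Neg ?E)" using wE by (intro prv_axiom) auto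
    then have "prv (insert ?E S) Bot" by (rule prv_negE) (use wE in \<open>auto intro: prv_assm\<close>)
    then show ?thesis using wA by (rule prv_botE)
  qed
  then show "prv S (sub1 (IV n) (Cst (num k)) (Imp (Eq (Cst c) (Var (IV n))) A))"
    using A by (simp add: sub1_num_guard_at_body prv_impI)
qed (use A wS in auto)

lemma prv_All_IV_num_guard:
  assumes p: "prv S (All (GV 0) (num_guard n A))" and A: "wf num A" "fv A \<subseteq> {IV n}"
  shows "prv S (All (IV n) A)"
proof (rule prv_omegaI)
  fix k
  have wS: "wf_ctx num S" using p by (rule prv_wf_ctx)
  have "prv S (num_guard_at n (num k) A)" using prv_allE_Cst[OF p, of "num k"] sub1_num_guard[OF A(2)] by simp
  then have "prv S (sub1 (IV n) (Cst (num k)) (Imp (Eq (Cst (num k)) (Var (IV n))) A))"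
    unfolding num_guard_at_def by (rule prv_allE_Cst) simp
  then have "prv S (Imp (Eq (Cst (num k)) (Cst (num k))) (sub1 (IV n) (Cst (num k)) A))"
    using A by (simp add: sub1_num_guard_at_body)
  then show "prv S (sub1 (IV n) (Cst (num k)) A)"
    by (rule prv_impE) (rule prv_eqRefl[OF wS], simp)
qed (use A p in \<open>auto dest: prv_wf_ctx\<close>)

lemma prv_num_guard_at_num:
  assumes "wf_ctx num S" and "wf num A" and "fv A \<subseteq> {IV n}" and "sub1 (IV n) (Cst (num j)) A \<in> S"
  shows "prv S (num_guard_at n (num j) A)"
  by (rule prv_num_guard_at) (use assms num_inj in \<open>auto intro: prv_assm\<close>)

lemma prv_num_guard_at_not_num:
  "wf_ctx num S \<Longrightarrow> wf num A \<Longrightarrow> fv A \<subseteq> {IV n} \<Longrightarrow> c \<notin> range num \<Longrightarrow> prv S (num_guard_at n c A)"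
  by (rule prv_num_guard_at) auto

lemma prv_Or_mono_left: "prv S (Or A e) \<Longrightarrow> prv (insert A S) B \<Longrightarrow> prv S (Or B e)"
proof -
  assume p: "prv S (Or A e)" and q: "prv (insert A S) B"
  have "wf_ctx num (insert e S)" "wf num e" "wf num B"
    using prv_wf[OF p] prv_wf[OF q] by (auto simp: wf_ctx_insert)
  then show ?thesis by (intro prv_orE[OF p prv_orI1[OF q] prv_orI2[OF prv_assm]]) auto
qed

lemma prv_All_Or_omegaI:
  assumes S: "finite S" "\<forall>G\<in>S. sentence num G" and e: "sentence num e"
    and A: "wf num A" "fv A \<subseteq> {IV n}"
    and all: "\<And>k. prv S (Or (sub1 (IV n) (Cst (num k)) A) e)"
  shows "prv S (Or (All (IV n) A) e)"
proof -
  have wS: "wf_ctx num S" using S by (rule wf_ctx_sentences)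
  have "prv S (Or (num_guard_at n c A) e)" for c
  proof (cases "c \<in> range num")
    case True
    then obtain j where c: "c = num j" by auto
    have "prv (insert (sub1 (IV n) (Cst (num j)) A) S) (num_guard_at n c A)"
      unfolding c using wS A by (intro prv_num_guard_at_num) (auto simp: wf_ctx_insert wf_sub1)
    then show ?thesis by (rule prv_Or_mono_left[OF all[of j]])
  next
    case False
    then show ?thesis
      using wS A e by (intro prv_orI1 prv_num_guard_at_not_num) (auto simp: sentence_def)
  qed
  then have "prv S (Or (All (GV 0) (num_guard n A)) e)"
    by (intro prv_All_Or_omegaG[OF S e wf_num_guard[OF A(1)] fv_num_guard[OF A(2)]])
      (simp add: sub1_num_guard[OF A(2)])
  moreover have "prv (insert (All (GV 0) (num_guard n A)) S) (All (IV n) A)"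
    using wS A by (intro prv_All_IV_num_guard[OF prv_assm]) (auto simp: wf_ctx_insert wf_num_guard)
  ultimately show ?thesis by (rule prv_Or_mono_left)
qed

lemma prv_All_Or_omega:
  assumes S: "finite S" "\<forall>G\<in>S. sentence num G" and e: "sentence num e"
    and A: "wf num A" "fv A \<subseteq> {x}"
    and all: "\<And>c. sort_ok num x (Cst c) \<Longrightarrow> prv S (Or (sub1 x (Cst c) A) e)"
  shows "prv S (Or (All x A) e)"
proof (cases x)
  case (GV n) then show ?thesis using prv_All_Or_omegaG[OF S e A(1), of n] A all by simp
next
  case (IV n) then show ?thesis using prv_All_Or_omegaI[OF S e A(1), of n] A all by simp
qed

lemma prv_contra: "prv D G \<Longrightarrow> Neg G \<in> D \<Longrightarrow> prv D Bot"
  by (rule prv_negE[OF prv_assm]) (auto dest: prv_wf_ctx)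

lemma prv_dnegI: "prv D G \<Longrightarrow> prv D (dneg G)"
proof -
  assume p: "prv D G"
  have w: "wf_ctx num (insert (Neg G) D)" using prv_wf[OF p] by (simp add: wf_ctx_insert)
  have "prv (insert (Neg G) D) Bot"
    by (rule prv_negE[OF prv_assm prv_weaken[OF p]]) (use w in auto)
  then show ?thesis unfolding dneg_def by (rule prv_negI)
qed

lemma prv_dneg_mp: "prv D (dneg (Imp A B)) \<Longrightarrow> prv D (dneg A) \<Longrightarrow> prv D (dneg B)"
proof -
  assume p1: "prv D (dneg (Imp A B))" and p2: "prv D (dneg A)"
  have wD: "wf_ctx num D" and wI: "wf num A" "wf num B" using prv_wf[OF p1] by (auto simp: dneg_def Neg_def)
  let ?D1 = "insert (Neg B) D"
  let ?D2 = "insert A ?D1"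
  let ?D3 = "insert (Imp A B) ?D2"
  have w: "wf_ctx num ?D1" "wf_ctx num ?D2" "wf_ctx num ?D3" using wD wI by (auto simp: wf_ctx_insert)
  have "prv ?D3 B" by (rule prv_impE[OF prv_assm prv_assm]) (use w in auto)
  then have "prv ?D3 Bot" by (rule prv_contra) auto
  then have q1: "prv ?D2 (Neg (Imp A B))" by (rule prv_negI)
  have q2: "prv ?D2 (Neg (Neg (Imp A B)))" by (rule prv_weaken[OF p1[unfolded dneg_def]]) (use w in auto)
  have "prv ?D2 Bot" by (rule prv_negE[OF q2 q1])
  then have q3: "prv ?D1 (Neg A)" by (rule prv_negI)
  have q4: "prv ?D1 (Neg (Neg A))" by (rule prv_weaken[OF p2[unfolded dneg_def]]) (use w in auto)
  have "prv ?D1 Bot" by (rule prv_negE[OF q4 q3])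
  then show ?thesis unfolding dneg_def by (rule prv_negI)
qed

lemma prv_dneg_Bot: "prv D (dneg Bot) \<Longrightarrow> prv D Bot"
proof -
  assume p: "prv D (dneg Bot)"
  have w: "wf_ctx num (insert Bot D)" using prv_wf[OF p] by (simp add: wf_ctx_insert)
  have "prv D (Neg Bot)" unfolding Neg_def by (rule prv_impI[OF prv_assm]) (use w in auto)
  then show ?thesis using p unfolding dneg_def by (rule prv_negE[rotated])
qed

lemma prv_weak_excluded_middle: "wf_ctx num D \<Longrightarrow> wf num A \<Longrightarrow> prv D (Or (Neg A) (dneg A))"
proof -
  assume wD: "wf_ctx num D" and wA: "wf num A"
  have ax: "prv D (Or (Neg A) (Or (Imp (Neg A) A) (Neg A)))"
    by (rule prv_axiom) (use HT_Axioms[of "Neg A" A] wA wD in auto)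
  have c1: "prv (insert (Neg A) D) (Or (Neg A) (dneg A))"
    by (rule prv_orI1[OF prv_assm]) (use wD wA in \<open>auto simp: wf_ctx_insert dneg_def\<close>)
  let ?O = "Or (Imp (Neg A) A) (Neg A)"
  let ?D1 = "insert ?O D"
  let ?D2 = "insert (Imp (Neg A) A) ?D1"
  let ?D3 = "insert (Neg A) ?D2"
  have w: "wf_ctx num ?D1" "wf_ctx num ?D2" "wf_ctx num ?D3" "wf_ctx num (insert (Neg A) ?D1)" using wD wA by (auto simp: wf_ctx_insert)
  have "prv ?D3 A" by (rule prv_impE[OF prv_assm prv_assm]) (use w in auto)
  then have "prv ?D3 Bot" by (rule prv_contra) auto
  then have "prv ?D2 (dneg A)" unfolding dneg_def by (rule prv_negI)
  then have d2: "prv ?D2 (Or (Neg A) (dneg A))" by (rule prv_orI2) (use wA in simp)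
  have d3: "prv (insert (Neg A) ?D1) (Or (Neg A) (dneg A))"
    by (rule prv_orI1[OF prv_assm]) (use w wA in \<open>auto simp: dneg_def\<close>)
  have "prv ?D1 (Or (Neg A) (dneg A))" by (rule prv_orE[OF prv_assm d2 d3]) (use w in auto)
  then show ?thesis by (rule prv_orE[OF ax c1])
qed

lemma prv_dneg_All:
  assumes p: "prv D (All (GV n) (dneg A))" and fD: "GV n \<notin> fvs D" and A: "fv A \<subseteq> {GV n}"
  shows "prv D (dneg (All (GV n) A))"
proof -
  let ?x = "GV n"
  have wD: "wf_ctx num D" and wA: "wf num A" using prv_wf[OF p] by (auto simp: dneg_def)
  have sq: "prv D (Ex ?x (Imp A (All ?x A)))"
    by (rule prv_axiom) (use SQ_Axioms[OF wA] wA wD in auto)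
  let ?D1 = "insert (Imp A (All ?x A)) D"
  let ?D2 = "insert (Neg (All ?x A)) ?D1"
  let ?D3 = "insert A ?D2"
  have w: "wf_ctx num ?D1" "wf_ctx num ?D2" "wf_ctx num ?D3" using wD wA by (auto simp: wf_ctx_insert)
  have "prv ?D3 (All ?x A)" by (rule prv_impE[OF prv_assm prv_assm]) (use w in auto)
  then have "prv ?D3 Bot" by (rule prv_contra) auto
  then have "prv ?D2 (Neg A)" by (rule prv_negI)
  moreover have "prv ?D2 (dneg A)" by (rule prv_allE_self[OF prv_weaken[OF p]]) (use w in auto)
  ultimately have "prv ?D2 Bot" unfolding dneg_def by (rule prv_negE[rotated])
  then have "prv ?D1 (dneg (All ?x A))" unfolding dneg_def by (rule prv_negI)
  then show ?thesis by (rule prv_exE[OF sq]) (use fD A in \<open>auto simp: dneg_def\<close>)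
qed

lemma prv_Ex_All_Neg:
  assumes p1: "prv D (Ex x A)" and p2: "prv D (All x (Neg A))" and fD: "x \<notin> fvs D"
  shows "prv D Bot"
proof -
  have w: "wf_ctx num (insert A D)" using prv_wf[OF p2] by (simp add: wf_ctx_insert)
  have "prv (insert A D) Bot"
    by (rule prv_negE[OF prv_allE_self[OF prv_weaken[OF p2]] prv_assm]) (use w in auto)
  then show ?thesis by (rule prv_exE[OF p1]) (use fD in auto)
qed

lemma prv_Or_Neg_Neg: "prv D (Or A B) \<Longrightarrow> prv D (Neg A) \<Longrightarrow> prv D (Neg B) \<Longrightarrow> prv D Bot"
proof -
  assume p: "prv D (Or A B)" "prv D (Neg A)" "prv D (Neg B)"
  have w: "wf_ctx num (insert A D)" "wf_ctx num (insert B D)" using prv_wf[OF p(1)] by (auto simp: wf_ctx_insert)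
  show ?thesis
    by (rule prv_orE[OF p(1) prv_negE[OF prv_weaken[OF p(2)] prv_assm] prv_negE[OF prv_weaken[OF p(3)] prv_assm]])
       (use w in auto)
qed

lemma prv_Imp_of_Neg: "prv D (Neg A) \<Longrightarrow> wf num B \<Longrightarrow> prv D (Imp A B)"
proof -
  assume p: "prv D (Neg A)" and wB: "wf num B"
  have w: "wf_ctx num (insert A D)" using prv_wf[OF p] by (auto simp: wf_ctx_insert)
  have "prv (insert A D) Bot" by (rule prv_negE[OF prv_weaken[OF p] prv_assm]) (use w in auto)
  then have "prv (insert A D) B" using wB by (rule prv_botE)
  then show ?thesis by (rule prv_impI)
qed

lemma prv_Imp_of_concl: "prv D B \<Longrightarrow> wf num A \<Longrightarrow> prv D (Imp A B)"
proof -
  assume p: "prv D B" and wA: "wf num A"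
  have w: "wf_ctx num (insert A D)" using prv_wf[OF p] wA by (auto simp: wf_ctx_insert)
  show ?thesis by (rule prv_impI[OF prv_weaken[OF p]]) (use w in auto)
qed

lemma prv_dneg_image: "finite D0 \<Longrightarrow> prv D0 G \<Longrightarrow> prv (dneg ` D0) (dneg G)"
proof (induction D0 arbitrary: G rule: finite_induct)
  case empty then show ?case using prv_dnegI by simp
next
  case (insert a D0)
  have "prv D0 (Imp a G)" using insert.prems by (rule prv_impI)
  then have p: "prv (dneg ` D0) (dneg (Imp a G))" by (rule insert.IH)
  have wa: "wf num a" using prv_wf[OF insert.prems] by (simp add: wf_ctx_insert)
  have w: "wf_ctx num (dneg ` insert a D0)" using prv_wf[OF p] wa by (auto simp: wf_ctx_def dneg_def)
  have "prv (dneg ` insert a D0) (dneg (Imp a G))" by (rule prv_weaken[OF p]) (use w in auto)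
  moreover have "prv (dneg ` insert a D0) (dneg a)" by (rule prv_assm) (use w in auto)
  ultimately show ?case by (rule prv_dneg_mp)
qed

end

section \<open>The Lindenbaum construction\<close>

instance var :: countable by countable_datatype
instance cmp :: countable by countable_datatype
instance trm :: (countable) countable by countable_datatype
instance form :: (countable, countable) countable by countable_datatype

lemma sentence_disjs: "\<forall>G\<in>set E. sentence num G \<Longrightarrow> sentence num (disjs E)"
  by (simp add: sentence_def wf_disjs fv_disjs)

lemma sentence_Or: "sentence num (Or A B) \<longleftrightarrow> sentence num A \<and> sentence num B"
  by (auto simp: sentence_def)

lemma sentence_quant_body:
  "sentence num (All x A) \<Longrightarrow> wf num A \<and> fv A \<subseteq> {x}"
  "sentence num (Ex x A) \<Longrightarrow> wf num A \<and> fv A \<subseteq> {x}"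
  by (auto simp: sentence_def)

lemma sentence_sub1_Cst:
  "sentence num (All x A) \<Longrightarrow> sort_ok num x (Cst c) \<Longrightarrow> sentence num (sub1 x (Cst c) A)"
  "sentence num (Ex x A) \<Longrightarrow> sort_ok num x (Cst c) \<Longrightarrow> sentence num (sub1 x (Cst c) A)"
  by (auto intro!: sentence_sub1 dest: sentence_quant_body)

context ht_calculus
begin

lemma prv_Or_absorb: "prv S (Or G (Or G e)) \<Longrightarrow> prv S (Or G e)"
proof -
  assume p: "prv S (Or G (Or G e))"
  then have w: "wf_ctx num (insert G S)" "wf_ctx num (insert (Or G e) S)" "wf num e"
    using prv_wf[OF p] by (auto simp: wf_ctx_insert)
  show ?thesis
    by (rule prv_orE[OF p prv_orI1[OF prv_assm] prv_assm]) (use w in auto)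
qed

lemma ex_witness_exists:
  assumes "finite S" and "\<forall>G\<in>S. sentence num G" and "sentence num e"
    and "Ex x A \<in> S" and "\<not> prv S e"
  shows "\<exists>c. sort_ok num x (Cst c) \<and> \<not> prv (insert (sub1 x (Cst c) A) S) e"
  using prv_Ex_omega_assm[OF assms(1-4)] assms(2,4,5) sentence_quant_body(2) by blast

lemma all_counterexample_exists:
  assumes "finite S" and "\<forall>G\<in>S. sentence num G" and "sentence num e"
    and "sentence num (All x A)" and "\<not> prv S (Or (All x A) e)"
  shows "\<exists>c. sort_ok num x (Cst c) \<and> \<not> prv S (Or (sub1 x (Cst c) A) e)"
  using prv_All_Or_omega[OF assms(1-3)] assms(4,5) sentence_quant_body(1) by blast

definition ex_witness :: "('c,'p) form set \<Rightarrow> ('c,'p) form \<Rightarrow> var \<Rightarrow> ('c,'p) form \<Rightarrow> 'c" where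
  "ex_witness S e x A = (SOME c. sort_ok num x (Cst c) \<and> \<not> prv (insert (sub1 x (Cst c) A) S) e)"

definition all_counterexample :: "('c,'p) form set \<Rightarrow> ('c,'p) form \<Rightarrow> var \<Rightarrow> ('c,'p) form \<Rightarrow> 'c" where
  "all_counterexample S e x A = (SOME c. sort_ok num x (Cst c) \<and> \<not> prv S (Or (sub1 x (Cst c) A) e))"

fun witnesses :: "('c,'p) form set \<Rightarrow> ('c,'p) form \<Rightarrow> ('c,'p) form \<Rightarrow> ('c,'p) form set" where
  "witnesses S e (Or A B) = {if prv (insert A S) e then B else A}"
| "witnesses S e (Ex x A) = {sub1 x (Cst (ex_witness S e x A)) A}"
| "witnesses S e _ = {}"

fun counterexamples :: "('c,'p) form set \<Rightarrow> ('c,'p) form \<Rightarrow> ('c,'p) form \<Rightarrow> ('c,'p) form list" where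
  "counterexamples S e (All x A) = [sub1 x (Cst (all_counterexample S e x A)) A]"
| "counterexamples S e _ = []"

fun lindenbaum_step :: "('c,'p) form set \<times> ('c,'p) form list \<Rightarrow> ('c,'p) form
    \<Rightarrow> ('c,'p) form set \<times> ('c,'p) form list" where
  "lindenbaum_step (S, E) G =
    (if \<not> sentence num G then (S, E)
     else if \<not> prv (insert G S) (disjs E) then (insert G S \<union> witnesses (insert G S) (disjs E) G, E)
     else (S, counterexamples S (disjs (G # E)) G @ G # E))"

fun lindenbaum_inv :: "('c,'p) form set \<times> ('c,'p) form list \<Rightarrow> bool" where
  "lindenbaum_inv (S, E) = (finite S \<and> (\<forall>G\<in>S. sentence num G) \<and> (\<forall>G\<in>set E. sentence num G)
     \<and> \<not> prv S (disjs E))"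

lemma lindenbaum_inv_accept:
  assumes inv: "lindenbaum_inv (S, E)" and G: "sentence num G" and np: "\<not> prv (insert G S) (disjs E)"
  shows "lindenbaum_inv (insert G S \<union> witnesses (insert G S) (disjs E) G, E)"
proof -
  let ?S = "insert G S" and ?e = "disjs E"
  have S: "finite ?S" "\<forall>H\<in>?S. sentence num H" and e: "sentence num ?e"
    using inv G by (auto intro: sentence_disjs)
  show ?thesis
  proof (cases G)
    case (Or A B)
    have "\<not> prv (insert B ?S) ?e" if "prv (insert A ?S) ?e"
      using prv_orE[OF prv_assm that] np Or S wf_ctx_sentences by blast
    then show ?thesis using inv np S G Or by (auto simp: sentence_Or insert_commute)
  next
    case (Ex x A)
    let ?c = "ex_witness ?S ?e x A"
    have "sort_ok num x (Cst ?c) \<and> \<not> prv (insert (sub1 x (Cst ?c) A) ?S) ?e"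
      unfolding ex_witness_def by (rule someI_ex, rule ex_witness_exists) (use S e np Ex in auto)
    then show ?thesis using inv S G Ex sentence_sub1_Cst(2) by (auto simp: insert_commute)
  qed (use inv np S in auto)
qed

lemma lindenbaum_inv_reject:
  assumes inv: "lindenbaum_inv (S, E)" and G: "sentence num G" and p: "prv (insert G S) (disjs E)"
  shows "lindenbaum_inv (S, counterexamples S (disjs (G # E)) G @ G # E)"
proof -
  have np: "\<not> prv S (Or G (disjs E))" using prv_Or_cancel[OF p] inv by auto
  show ?thesis
  proof (cases G)
    case (All x A)
    let ?c = "all_counterexample S (disjs (G # E)) x A"
    have "\<exists>c. sort_ok num x (Cst c) \<and> \<not> prv S (Or (sub1 x (Cst c) A) (disjs (G # E)))"
      by (rule all_counterexample_exists) (use inv G All np prv_Or_absorb in \<open>auto simp: sentence_Or intro: sentence_disjs\<close>)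
    then have "sort_ok num x (Cst ?c) \<and> \<not> prv S (Or (sub1 x (Cst ?c) A) (disjs (G # E)))"
      unfolding all_counterexample_def by (rule someI_ex)
    then show ?thesis using inv G All sentence_sub1_Cst(1) by auto
  qed (use inv G np in auto)
qed

lemma lindenbaum_inv_step: "lindenbaum_inv SE \<Longrightarrow> lindenbaum_inv (lindenbaum_step SE G)"
  using lindenbaum_inv_accept[of "fst SE" "snd SE" G] lindenbaum_inv_reject[of "fst SE" "snd SE" G]
  by (cases SE) (simp del: lindenbaum_inv.simps)

context
  fixes F :: "('c,'p) form"
  assumes F: "sentence num F" "\<not> prv {} F"
begin

primrec chain :: "nat \<Rightarrow> ('c,'p) form set \<times> ('c,'p) form list" where
  "chain 0 = ({}, [F])"
| "chain (Suc k) = lindenbaum_step (chain k) (from_nat k)"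

definition lindenbaum :: "('c,'p) form set" where
  "lindenbaum = (\<Union>k. fst (chain k))"

definition rejected :: "('c,'p) form set" where
  "rejected = (\<Union>k. set (snd (chain k)))"

lemma lindenbaum_inv_chain: "lindenbaum_inv (chain k)"
proof (induction k)
  case 0
  have "\<not> prv {} (Or F Bot)"
  proof
    assume "prv {} (Or F Bot)"
    then have "prv {} F"
      by (rule prv_orE[OF _ prv_assm prv_botE[OF prv_assm]]) (use F in \<open>auto simp: wf_ctx_def sentence_def\<close>)
    then show False using F by simp
  qed
  then show ?case using F by simp
next
  case (Suc k) then show ?case by (simp add: lindenbaum_inv_step)
qed

lemma chain_mono_Suc: "fst (chain k) \<subseteq> fst (chain (Suc k)) \<and> set (snd (chain k)) \<subseteq> set (snd (chain (Suc k)))"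
  by (cases "chain k") auto

lemma chain_mono: "k \<le> m \<Longrightarrow> fst (chain k) \<subseteq> fst (chain m) \<and> set (snd (chain k)) \<subseteq> set (snd (chain m))"
proof (induction m)
  case (Suc m) then show ?case using chain_mono_Suc[of m] by (cases "k = Suc m") auto
qed simp

lemma finite_subset_chain: "finite D \<Longrightarrow> D \<subseteq> lindenbaum \<Longrightarrow> \<exists>m. D \<subseteq> fst (chain m)"
proof (induction D rule: finite_induct)
  case (insert a D)
  then obtain m where m: "D \<subseteq> fst (chain m)" by auto
  obtain k where k: "a \<in> fst (chain k)" using insert.prems by (auto simp: lindenbaum_def)
  have "insert a D \<subseteq> fst (chain (max m k))"
    using m k chain_mono[of m "max m k"] chain_mono[of k "max m k"] by auto
  then show ?case by blast
qed simp

lemma lindenbaum_sentences: "G \<in> lindenbaum \<Longrightarrow> sentence num G"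
proof -
  assume "G \<in> lindenbaum"
  then obtain k where "G \<in> fst (chain k)" by (auto simp: lindenbaum_def)
  with lindenbaum_inv_chain[of k] show ?thesis by (cases "chain k") auto
qed

lemma lindenbaum_not_prv_rejected: "finite D \<Longrightarrow> D \<subseteq> lindenbaum \<Longrightarrow> G \<in> rejected \<Longrightarrow> \<not> prv D G"
proof
  assume D: "finite D" "D \<subseteq> lindenbaum" and "G \<in> rejected" and p: "prv D G"
  obtain m where "D \<subseteq> fst (chain m)" using finite_subset_chain D by blast
  moreover obtain k where "G \<in> set (snd (chain k))" using \<open>G \<in> rejected\<close> by (auto simp: rejected_def)
  ultimately obtain S E where SE: "chain (max m k) = (S, E)" and DS: "D \<subseteq> S" and "G \<in> set E"
    using chain_mono[of m "max m k"] chain_mono[of k "max m k"] by (cases "chain (max m k)") auto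
  have inv: "lindenbaum_inv (S, E)" using lindenbaum_inv_chain SE by metis
  then have "wf_ctx num S" by (simp add: wf_ctx_sentences)
  then have "prv S G" by (rule prv_weaken[OF p DS])
  then have "prv S (disjs E)" using prv_disjsI \<open>G \<in> set E\<close> inv by (auto simp: sentence_def)
  then show False using inv by simp
qed

lemma lindenbaum_rejected_disjoint: "G \<in> lindenbaum \<Longrightarrow> G \<notin> rejected"
  using lindenbaum_not_prv_rejected[of "{G}" G] prv_assm[of G "{G}"] lindenbaum_sentences
  by (auto simp: wf_ctx_def sentence_def)

lemma chain_to_nat:
  assumes "sentence num G" and "chain (to_nat G) = (S, E)"
  shows "chain (Suc (to_nat G)) = (if prv (insert G S) (disjs E)
     then (S, counterexamples S (disjs (G # E)) G @ G # E)
     else (insert G S \<union> witnesses (insert G S) (disjs E) G, E))"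
  using assms by simp

declare chain.simps(2) [simp del]

lemma lindenbaum_or_rejected: "sentence num G \<Longrightarrow> G \<in> lindenbaum \<or> G \<in> rejected"
proof -
  assume G: "sentence num G"
  obtain S E where "chain (to_nat G) = (S, E)" by (cases "chain (to_nat G)")
  then have "G \<in> fst (chain (Suc (to_nat G))) \<or> G \<in> set (snd (chain (Suc (to_nat G))))"
    using chain_to_nat[OF G] by simp
  then show ?thesis unfolding lindenbaum_def rejected_def by blast
qed

lemma lindenbaum_closed: "finite D \<Longrightarrow> D \<subseteq> lindenbaum \<Longrightarrow> prv D G \<Longrightarrow> sentence num G \<Longrightarrow> G \<in> lindenbaum"
  using lindenbaum_or_rejected lindenbaum_not_prv_rejected by blast

lemma lindenbaum_not_F: "F \<notin> lindenbaum"
proof -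
  have "F \<in> rejected" unfolding rejected_def by (rule UN_I[of 0]) simp_all
  then show ?thesis using lindenbaum_rejected_disjoint by blast
qed

lemma lindenbaum_accepted:
  assumes "G \<in> lindenbaum" and SE: "chain (to_nat G) = (S, E)"
  shows "\<not> prv (insert G S) (disjs E)" and "witnesses (insert G S) (disjs E) G \<subseteq> lindenbaum"
proof -
  have G: "sentence num G" using lindenbaum_sentences[OF assms(1)] .
  have "G \<notin> set (snd (chain (Suc (to_nat G))))"
    using lindenbaum_rejected_disjoint[OF assms(1)] unfolding rejected_def by blast
  then show np: "\<not> prv (insert G S) (disjs E)" using chain_to_nat[OF G SE] by auto
  then have "witnesses (insert G S) (disjs E) G \<subseteq> fst (chain (Suc (to_nat G)))"
    using chain_to_nat[OF G SE] by auto
  then show "witnesses (insert G S) (disjs E) G \<subseteq> lindenbaum" by (auto simp: lindenbaum_def)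
qed

lemma lindenbaum_prime: "Or A B \<in> lindenbaum \<Longrightarrow> A \<in> lindenbaum \<or> B \<in> lindenbaum"
  using lindenbaum_accepted(2)[of "Or A B"] by (cases "chain (to_nat (Or A B))") (auto split: if_splits)

lemma lindenbaum_Ex_witness:
  assumes "Ex x A \<in> lindenbaum"
  shows "\<exists>c. sort_ok num x (Cst c) \<and> sub1 x (Cst c) A \<in> lindenbaum"
proof -
  obtain S E where SE: "chain (to_nat (Ex x A)) = (S, E)" by (cases "chain (to_nat (Ex x A))")
  let ?c = "ex_witness (insert (Ex x A) S) (disjs E) x A"
  have "lindenbaum_inv (S, E)" using lindenbaum_inv_chain SE by metis
  then have "\<exists>c. sort_ok num x (Cst c) \<and> \<not> prv (insert (sub1 x (Cst c) A) (insert (Ex x A) S)) (disjs E)"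
    using lindenbaum_accepted(1)[OF assms SE] lindenbaum_sentences[OF assms]
    by (intro ex_witness_exists) (auto intro: sentence_disjs)
  then have "sort_ok num x (Cst ?c)" unfolding ex_witness_def by (rule someI2_ex) blast
  moreover have "sub1 x (Cst ?c) A \<in> lindenbaum" using lindenbaum_accepted(2)[OF assms SE] by simp
  ultimately show ?thesis by blast
qed

lemma lindenbaum_All_counterexample:
  assumes "All x A \<notin> lindenbaum" and G: "sentence num (All x A)"
  shows "\<exists>c. sort_ok num x (Cst c) \<and> sub1 x (Cst c) A \<notin> lindenbaum"
proof -
  let ?G = "All x A"
  obtain S E where SE: "chain (to_nat ?G) = (S, E)" by (cases "chain (to_nat ?G)")
  let ?c = "all_counterexample S (disjs (?G # E)) x A"
  have inv: "lindenbaum_inv (S, E)" using lindenbaum_inv_chain SE by metis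
  have p: "prv (insert ?G S) (disjs E)"
  proof (rule ccontr)
    assume "\<not> prv (insert ?G S) (disjs E)"
    then have "?G \<in> fst (chain (Suc (to_nat ?G)))" using chain_to_nat[OF G SE] by simp
    then show False using assms(1) unfolding lindenbaum_def by blast
  qed
  then have "sub1 x (Cst ?c) A \<in> set (snd (chain (Suc (to_nat ?G))))"
    using chain_to_nat[OF G SE] by simp
  then have "sub1 x (Cst ?c) A \<notin> lindenbaum"
    using lindenbaum_rejected_disjoint by (auto simp: rejected_def)
  moreover have "\<not> prv S (Or ?G (disjs E))" using prv_Or_cancel[OF p] inv by auto
  then have "\<exists>c. sort_ok num x (Cst c) \<and> \<not> prv S (Or (sub1 x (Cst c) A) (disjs (?G # E)))"
    by (intro all_counterexample_exists)
      (use inv G prv_Or_absorb in \<open>auto simp: sentence_Or intro: sentence_disjs\<close>)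
  then have "sort_ok num x (Cst ?c)" unfolding all_counterexample_def by (rule someI2_ex) blast
  ultimately show ?thesis by blast
qed

end

end

section \<open>Saturated theories\<close>

fun atom_form :: "('c,'p) gatom \<Rightarrow> ('c,'p) form" where
  "atom_form (GP p cs) = Pred p (map Cst cs)"
| "atom_form (GAL X V A cs) = AtLeast X V A (map Cst cs)"
| "atom_form (GAM X V A cs) = AtMost X V A (map Cst cs)"

locale atom_constructor =
  fixes num :: "int \<Rightarrow> 'c" and mk :: "'c trm list \<Rightarrow> ('c,'p) form" and Q :: "nat \<Rightarrow> bool"
  assumes mk_subst: "\<And>s ts. subst s (mk ts) = mk (map (substt s) ts)"
    and mk_substok: "\<And>s ts. substok s (mk ts)"
    and mk_fv: "\<And>ts. fv (mk ts) = \<Union> (fvt ` set ts)"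
    and mk_wf: "\<And>ts. wf num (mk ts) = (Q (length ts) \<and> list_all (wf_trm num) ts)"

lemma atom_constructor_Pred: "atom_constructor num (Pred p) (\<lambda>_. True)"
  by unfold_locales auto

lemma atom_constructor_AtLeast:
  "atom_constructor num (AtLeast X V A) (\<lambda>n. sym_ok num X V A \<and> n = Suc (length V))"
  by unfold_locales (auto simp: sym_ok_def)

lemma atom_constructor_AtMost:
  "atom_constructor num (AtMost X V A) (\<lambda>n. sym_ok num X V A \<and> n = Suc (length V))"
  by unfold_locales (auto simp: sym_ok_def)

context ht_calculus
begin

definition closed_theory :: "('c,'p) form set \<Rightarrow> bool" where
  "closed_theory \<Theta> = ((\<forall>G\<in>\<Theta>. sentence num G) \<and> (\<forall>D G. finite D \<longrightarrow> D \<subseteq> \<Theta> \<longrightarrow> prv D G \<longrightarrow> sentence num G \<longrightarrow> G \<in> \<Theta>)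
     \<and> Bot \<notin> \<Theta>)"

lemma closed_theoryD:
  assumes "closed_theory \<Theta>"
  shows "G \<in> \<Theta> \<Longrightarrow> sentence num G"
    and "finite D \<Longrightarrow> D \<subseteq> \<Theta> \<Longrightarrow> prv D G \<Longrightarrow> sentence num G \<Longrightarrow> G \<in> \<Theta>"
    and "Bot \<notin> \<Theta>"
  using assms by (auto simp: closed_theory_def)

lemma closed_theory_prv1: "closed_theory \<Theta> \<Longrightarrow> A \<in> \<Theta> \<Longrightarrow> prv {A} G \<Longrightarrow> sentence num G \<Longrightarrow> G \<in> \<Theta>"
  by (rule closed_theoryD(2)[of \<Theta> "{A}"]) auto

lemma closed_theory_prv2: "closed_theory \<Theta> \<Longrightarrow> A \<in> \<Theta> \<Longrightarrow> B \<in> \<Theta> \<Longrightarrow> prv {A, B} G \<Longrightarrow> sentence num G \<Longrightarrow> G \<in> \<Theta>"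
  by (rule closed_theoryD(2)[of \<Theta> "{A, B}"]) auto

lemma closed_theory_prv0: "closed_theory \<Theta> \<Longrightarrow> prv {} G \<Longrightarrow> sentence num G \<Longrightarrow> G \<in> \<Theta>"
  by (rule closed_theoryD(2)[of \<Theta> "{}"]) auto

lemma closed_theory_Axioms: "closed_theory \<Theta> \<Longrightarrow> G \<in> Axioms num \<union> Gam \<Longrightarrow> sentence num G \<Longrightarrow> G \<in> \<Theta>"
  by (rule closed_theory_prv0) (auto intro!: prv_axiom simp: wf_ctx_def sentence_def)

lemma wf_ctx_single: "sentence num A \<Longrightarrow> wf_ctx num {A}" by (simp add: wf_ctx_def sentence_def)
lemma wf_ctx_pair: "sentence num A \<Longrightarrow> sentence num B \<Longrightarrow> wf_ctx num {A, B}" by (simp add: wf_ctx_def sentence_def)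

lemma closed_theory_And_iff:
  assumes T: "closed_theory \<Theta>" and s: "sentence num (And A B)"
  shows "And A B \<in> \<Theta> \<longleftrightarrow> A \<in> \<Theta> \<and> B \<in> \<Theta>"
proof -
  have sA: "sentence num A" "sentence num B" using s by (auto simp: sentence_def)
  show ?thesis
  proof safe
    assume "And A B \<in> \<Theta>"
    moreover have "prv {And A B} A" "prv {And A B} B"
      using wf_ctx_single[OF s] by (auto intro: prv_andE1 prv_andE2 prv_assm)
    ultimately show "A \<in> \<Theta>" "B \<in> \<Theta>" using closed_theory_prv1[OF T] sA by blast+
  next
    assume "A \<in> \<Theta>" "B \<in> \<Theta>"
    moreover have "prv {A, B} A" "prv {A, B} B" using wf_ctx_pair[OF sA] by (auto intro: prv_assm)
    then have "prv {A, B} (And A B)" by (rule prv_andI)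
    ultimately show "And A B \<in> \<Theta>" using closed_theory_prv2[OF T] s by blast
  qed
qed

lemma closed_theory_OrI:
  assumes T: "closed_theory \<Theta>" and s: "sentence num (Or A B)" and ab: "A \<in> \<Theta> \<or> B \<in> \<Theta>"
  shows "Or A B \<in> \<Theta>"
proof -
  have sA: "sentence num A" "sentence num B" using s by (auto simp: sentence_def)
  have "prv {A} A" "prv {B} B" using wf_ctx_single[OF sA(1)] wf_ctx_single[OF sA(2)] by (auto intro: prv_assm)
  then have "prv {A} (Or A B)" "prv {B} (Or A B)"
    using sA by (auto intro: prv_orI1 prv_orI2 simp: sentence_def)
  then show ?thesis using ab closed_theory_prv1[OF T] s by blast
qed

lemma closed_theory_mp:
  assumes T: "closed_theory \<Theta>" and i: "Imp A B \<in> \<Theta>" "A \<in> \<Theta>"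
  shows "B \<in> \<Theta>"
proof -
  have s: "sentence num (Imp A B)" "sentence num A" using i closed_theoryD(1)[OF T] by auto
  then have sB: "sentence num B" by (simp add: sentence_def)
  have "prv {Imp A B, A} B" using wf_ctx_pair[OF s] by (auto intro!: prv_impE[OF prv_assm prv_assm])
  then show ?thesis using closed_theory_prv2[OF T i] sB by blast
qed

lemma closed_theory_ImpI_concl:
  assumes T: "closed_theory \<Theta>" and s: "sentence num (Imp A B)" and b: "B \<in> \<Theta>"
  shows "Imp A B \<in> \<Theta>"
proof -
  have sB: "sentence num B" "wf num A" using s by (auto simp: sentence_def)
  have "prv {B} (Imp A B)" by (rule prv_Imp_of_concl[OF prv_assm]) (use wf_ctx_single[OF sB(1)] sB in auto)
  then show ?thesis using closed_theory_prv1[OF T b] s by blast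
qed

lemma closed_theory_ImpI_Neg:
  assumes T: "closed_theory \<Theta>" and s: "sentence num (Imp A B)" and b: "Neg A \<in> \<Theta>"
  shows "Imp A B \<in> \<Theta>"
proof -
  have sB: "sentence num (Neg A)" "wf num B" using s by (auto simp: sentence_def)
  have "prv {Neg A} (Imp A B)" by (rule prv_Imp_of_Neg[OF prv_assm]) (use wf_ctx_single[OF sB(1)] sB in auto)
  then show ?thesis using closed_theory_prv1[OF T b] s by blast
qed

lemma closed_theory_contra:
  assumes T: "closed_theory \<Theta>" and a: "A \<in> \<Theta>" "Neg A \<in> \<Theta>"
  shows False
proof -
  have s: "sentence num A" "sentence num (Neg A)" using a closed_theoryD(1)[OF T] by auto
  have "prv {A, Neg A} Bot" using wf_ctx_pair[OF s] by (auto intro!: prv_negE[OF prv_assm prv_assm])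
  then have "Bot \<in> \<Theta>" using closed_theory_prv2[OF T a] by (simp add: sentence_def)
  then show False using closed_theoryD(3)[OF T] by simp
qed

lemma closed_theory_allE:
  assumes T: "closed_theory \<Theta>" and a: "All x A \<in> \<Theta>" and c: "sort_ok num x (Cst c)"
  shows "sub1 x (Cst c) A \<in> \<Theta>"
proof -
  have s: "sentence num (All x A)" using a closed_theoryD(1)[OF T] by auto
  have "prv {All x A} (All x A)" by (rule prv_assm) (use wf_ctx_single[OF s] in auto)
  then have "prv {All x A} (sub1 x (Cst c) A)" using c by (rule prv_allE_Cst)
  then show ?thesis using closed_theory_prv1[OF T a] sentence_sub1_Cst(1)[OF s c] by blast
qed

lemma closed_theory_exI:
  assumes T: "closed_theory \<Theta>" and s: "sentence num (Ex x A)" and a: "sub1 x (Cst c) A \<in> \<Theta>"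
  and c: "sort_ok num x (Cst c)"
  shows "Ex x A \<in> \<Theta>"
proof -
  have sa: "sentence num (sub1 x (Cst c) A)" by (rule sentence_sub1_Cst(2)[OF s c])
  have "prv {sub1 x (Cst c) A} (sub1 x (Cst c) A)" by (rule prv_assm) (use wf_ctx_single[OF sa] in auto)
  then have "prv {sub1 x (Cst c) A} (Ex x A)"
    using c by (rule prv_exI_Cst) (use s in \<open>auto simp: sentence_def\<close>)
  then show ?thesis using closed_theory_prv1[OF T a] s by blast
qed

lemma closed_theory_std_iff:
  assumes T: "closed_theory \<Theta>" and s: "sentence num G" and G: "nopred G" "sigma0 G"
  shows "G \<in> \<Theta> \<longleftrightarrow> csat num {} (env0 num) G"
proof
  assume g: "G \<in> \<Theta>"
  show "csat num {} (env0 num) G"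
  proof (rule ccontr)
    assume n: "\<not> csat num {} (env0 num) G"
    have "Neg G \<in> \<Theta>"
      by (rule closed_theory_Axioms[OF T]) (use s G n in \<open>auto intro!: Std_Axioms simp: sentence_def Neg_def\<close>)
    then show False using closed_theory_contra[OF T g] by simp
  qed
next
  assume "csat num {} (env0 num) G"
  then have "G \<in> Axioms num" using s G by (intro Std_Axioms) auto
  then show "G \<in> \<Theta>" using s by (intro closed_theory_Axioms[OF T]) auto
qed

lemma closed_theory_atom_replace1:
  assumes T: "closed_theory \<Theta>" and am: "atom_constructor num mk Q"
    and s1: "sentence num (mk (us @ t1 # ts))" and s2: "sentence num (mk (us @ t2 # ts))"
    and ev: "eval num (env0 num) t1 = eval num (env0 num) t2"
    and m: "mk (us @ t1 # ts) \<in> \<Theta>"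
  shows "mk (us @ t2 # ts) \<in> \<Theta>"
proof -
  interpret atom_constructor num mk Q by (rule am)
  let ?x = "GV 0"
  let ?G = "mk (us @ Var ?x # ts)"
  let ?D = "{mk (us @ t1 # ts)}"
  have cl: "\<forall>u\<in>set us \<union> set ts. fvt u = {}" "fvt t1 = {}" "fvt t2 = {}" using s1 s2 by (auto simp: sentence_def mk_fv)
  have wt: "wf_trm num t1" "wf_trm num t2" using s1 s2 by (auto simp: sentence_def mk_wf list_all_iff)
  have sub: "sub1 ?x t (mk (us @ Var ?x # ts)) = mk (us @ t # ts)" if "fvt t = {}" for t
  proof -
    have "map (substt ((\<lambda>v. Var v)(?x := t))) us = us" "map (substt ((\<lambda>v. Var v)(?x := t))) ts = ts"
      using cl by (auto intro!: map_idI substt_closed)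
    then show ?thesis by (simp add: sub1_def mk_subst)
  qed
  have wD: "wf_ctx num ?D" using s1 by (rule wf_ctx_single)
  have eq: "prv ?D (Eq t1 t2)"
    by (rule prv_axiom[OF _ _ wD]) (use wt cl ev in \<open>auto intro!: Std_Axioms simp: sentence_def\<close>)
  have p1: "prv ?D (sub1 ?x t1 ?G)" using sub[OF cl(2)] wD by (auto intro: prv_assm)
  have "prv ?D (sub1 ?x t2 ?G)"
    by (rule deriv.eqSubst[OF eq p1]) (use sub[OF cl(3)] wD s2 in \<open>auto simp: sub1ok_def mk_substok wfseqI sentence_def\<close>)
  then have "prv ?D (mk (us @ t2 # ts))" using sub[OF cl(3)] by simp
  then show ?thesis using closed_theory_prv1[OF T m] s2 by blast
qed

lemma closed_theory_atom_replace:
  assumes T: "closed_theory \<Theta>" and am: "atom_constructor num mk Q"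
  shows "sentence num (mk (us @ ts)) \<Longrightarrow>
    mk (us @ ts) \<in> \<Theta> \<longleftrightarrow> mk (us @ map (\<lambda>t. Cst (eval num (env0 num) t)) ts) \<in> \<Theta>"
proof (induction ts arbitrary: us)
  case (Cons t ts)
  interpret atom_constructor num mk Q by (rule am)
  let ?v = "eval num (env0 num) t"
  have s2: "sentence num (mk (us @ Cst ?v # ts))"
    using Cons.prems by (auto simp: sentence_def mk_fv mk_wf list_all_iff)
  have "mk (us @ t # ts) \<in> \<Theta> \<longleftrightarrow> mk (us @ Cst ?v # ts) \<in> \<Theta>"
    using closed_theory_atom_replace1[OF T am Cons.prems s2] closed_theory_atom_replace1[OF T am s2 Cons.prems] by auto
  also have "\<dots> \<longleftrightarrow> mk ((us @ [Cst ?v]) @ map (\<lambda>t. Cst (eval num (env0 num) t)) ts) \<in> \<Theta>"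
    using Cons.IH[of "us @ [Cst ?v]"] s2 by simp
  finally show ?case by simp
qed simp

lemma closed_theory_atom_eval:
  assumes T: "closed_theory \<Theta>" and am: "atom_constructor num mk Q" and s: "sentence num (mk ts)"
  shows "mk ts \<in> \<Theta> \<longleftrightarrow> mk (map Cst (map (eval num (env0 num)) ts)) \<in> \<Theta>"
  using closed_theory_atom_replace[OF T am, of "[]" ts] s by (simp add: comp_def)

definition saturated :: "('c,'p) form set \<Rightarrow> bool" where
  "saturated \<Theta> = (closed_theory \<Theta> \<and> (\<forall>A B. Or A B \<in> \<Theta> \<longrightarrow> A \<in> \<Theta> \<or> B \<in> \<Theta>)
     \<and> (\<forall>x A. Ex x A \<in> \<Theta> \<longrightarrow> (\<exists>c. sort_ok num x (Cst c) \<and> sub1 x (Cst c) A \<in> \<Theta>))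
     \<and> (\<forall>x A. sentence num (All x A) \<longrightarrow> (\<forall>c. sort_ok num x (Cst c) \<longrightarrow> sub1 x (Cst c) A \<in> \<Theta>)
          \<longrightarrow> All x A \<in> \<Theta>))"

lemma saturated_Or_iff:
  "saturated \<Theta> \<Longrightarrow> sentence num (Or A B) \<Longrightarrow> Or A B \<in> \<Theta> \<longleftrightarrow> A \<in> \<Theta> \<or> B \<in> \<Theta>"
  using closed_theory_OrI by (auto simp: saturated_def)

lemma saturated_All_iff:
  assumes "saturated \<Theta>" and "sentence num (All x A)"
  shows "All x A \<in> \<Theta> \<longleftrightarrow> (\<forall>c. sort_ok num x (Cst c) \<longrightarrow> sub1 x (Cst c) A \<in> \<Theta>)"
  using assms closed_theory_allE by (auto simp: saturated_def)

lemma saturated_Ex_iff: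
  assumes "saturated \<Theta>" and "sentence num (Ex x A)"
  shows "Ex x A \<in> \<Theta> \<longleftrightarrow> (\<exists>c. sort_ok num x (Cst c) \<and> sub1 x (Cst c) A \<in> \<Theta>)"
  using assms closed_theory_exI by (auto simp: saturated_def)

text \<open>The implication clause is the only one that depends on the world, so it is a hypothesis.\<close>

lemma truth_saturated:
  assumes sat: "saturated \<Theta>"
    and Imp_iff: "\<And>A B. sentence num (Imp A B) \<Longrightarrow>
       (htsat num {a. atom_form a \<in> \<Theta>} T (env0 num) A \<longleftrightarrow> A \<in> \<Theta>) \<Longrightarrow>
       (htsat num {a. atom_form a \<in> \<Theta>} T (env0 num) B \<longleftrightarrow> B \<in> \<Theta>) \<Longrightarrow>
       (htsat num {a. atom_form a \<in> \<Theta>} T (env0 num) (Imp A B) \<longleftrightarrow> Imp A B \<in> \<Theta>)"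
  shows "sentence num G \<Longrightarrow> htsat num {a. atom_form a \<in> \<Theta>} T (env0 num) G \<longleftrightarrow> G \<in> \<Theta>"
proof (induction G rule: measure_induct_rule[where f = conn_size])
  case (less G)
  let ?H = "{a. atom_form a \<in> \<Theta>}"
  have T: "closed_theory \<Theta>" using sat by (simp add: saturated_def)
  have IH: "htsat num ?H T (env0 num) A \<longleftrightarrow> A \<in> \<Theta>"
    if "conn_size A < conn_size G" and "sentence num A" for A
    using less.IH that by blast
  have IH_sub1: "htsat num ?H T (env0 num) (sub1 x (Cst c) A) \<longleftrightarrow> sub1 x (Cst c) A \<in> \<Theta>"
    if "G = All x A \<or> G = Ex x A" and "sort_ok num x (Cst c)" for x A c
    using that IH[of "sub1 x (Cst c) A"] sentence_sub1_Cst[of num x A c] less.prems by auto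
  show ?case
  proof (cases G)
    case Bot
    then show ?thesis using closed_theoryD(3)[OF T] by simp
  next
    case (Pred p ts)
    then show ?thesis using closed_theory_atom_eval[OF T atom_constructor_Pred] less.prems by simp
  next
    case (AtLeast X V A ts)
    then show ?thesis using closed_theory_atom_eval[OF T atom_constructor_AtLeast] less.prems by simp
  next
    case (AtMost X V A ts)
    then show ?thesis using closed_theory_atom_eval[OF T atom_constructor_AtMost] less.prems by simp
  next
    case (Cmp c a b)
    then show ?thesis using closed_theory_std_iff[OF T less.prems] by simp
  next
    case (Eq a b)
    then show ?thesis using closed_theory_std_iff[OF T less.prems] by simp
  next
    case (And A B)
    then show ?thesis using IH[of A] IH[of B] closed_theory_And_iff[OF T] less.prems
      by (auto simp: sentence_def)
  next
    case (Or A B)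
    then show ?thesis using IH[of A] IH[of B] saturated_Or_iff[OF sat] less.prems
      by (auto simp: sentence_def)
  next
    case (Imp A B)
    then show ?thesis using IH[of A] IH[of B] Imp_iff less.prems by (auto simp: sentence_def)
  next
    case (All x A)
    have "htsat num ?H T (env0 num) G \<longleftrightarrow> (\<forall>c. sort_ok num x (Cst c) \<longrightarrow> sub1 x (Cst c) A \<in> \<Theta>)"
      using All by (simp add: htsat_All_Cst IH_sub1)
    then show ?thesis using All saturated_All_iff[OF sat] less.prems by simp
  next
    case (Ex x A)
    have "htsat num ?H T (env0 num) G \<longleftrightarrow> (\<exists>c. sort_ok num x (Cst c) \<and> sub1 x (Cst c) A \<in> \<Theta>)"
      using Ex by (simp add: htsat_Ex_Cst IH_sub1 cong: conj_cong)
    then show ?thesis using Ex saturated_Ex_iff[OF sat] less.prems by simp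
  qed
qed

section \<open>The canonical model\<close>

context
  fixes F :: "('c,'p) form"
  assumes F: "sentence num F" "\<not> prv {} F"
begin

abbreviation here :: "('c,'p) form set" where
  "here \<equiv> lindenbaum F"

definition there :: "('c,'p) form set" where
  "there = {G. sentence num G \<and> dneg G \<in> here}"

lemma sentence_dneg: "sentence num (dneg G) = sentence num G" by (simp add: dneg_def sentence_def)

lemma closed_theory_here: "closed_theory here"
proof -
  have "Bot \<notin> here"
  proof
    assume b: "Bot \<in> here"
    have "prv {Bot} F" by (rule prv_botE[OF prv_assm]) (use F in \<open>auto simp: wf_ctx_def sentence_def\<close>)
    then have "F \<in> here" using lindenbaum_closed[OF F, of "{Bot}"] b F by auto
    then show False using lindenbaum_not_F[OF F] by simp
  qed
  then show ?thesis using lindenbaum_sentences[OF F] lindenbaum_closed[OF F] by (auto simp: closed_theory_def)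
qed

lemma here_subset_there: "G \<in> here \<Longrightarrow> G \<in> there"
proof -
  assume g: "G \<in> here"
  have s: "sentence num G" using closed_theoryD(1)[OF closed_theory_here g] .
  have "prv {G} (dneg G)" by (rule prv_dnegI[OF prv_assm]) (use wf_ctx_single[OF s] in auto)
  then have "dneg G \<in> here" using closed_theory_prv1[OF closed_theory_here g] s by (simp add: sentence_dneg)
  then show ?thesis using s by (simp add: there_def)
qed

lemma closed_theory_there: "closed_theory there"
proof -
  have cl: "G \<in> there" if "finite D" "D \<subseteq> there" "prv D G" "sentence num G" for D G
  proof -
    have "prv (dneg ` D) (dneg G)" by (rule prv_dneg_image[OF that(1,3)])
    moreover have "dneg ` D \<subseteq> here" using that(2) by (auto simp: there_def)
    ultimately have "dneg G \<in> here" using closed_theoryD(2)[OF closed_theory_here, of "dneg ` D" "dneg G"] that by (simp add: sentence_dneg)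
    then show ?thesis using that by (simp add: there_def)
  qed
  have "Bot \<notin> there"
  proof
    assume "Bot \<in> there"
    then have b: "dneg Bot \<in> here" by (simp add: there_def)
    have "prv {dneg Bot} Bot" by (rule prv_dneg_Bot[OF prv_assm]) (auto simp: wf_ctx_def dneg_def)
    then have "Bot \<in> here" using closed_theory_prv1[OF closed_theory_here b] by (simp add: sentence_def)
    then show False using closed_theoryD(3)[OF closed_theory_here] by simp
  qed
  then show ?thesis using cl by (auto simp: closed_theory_def there_def)
qed

lemma there_Neg_complete:
  assumes s: "sentence num A" and n: "A \<notin> there"
  shows "Neg A \<in> there"
proof -
  have "prv {} (Or (Neg A) (dneg A))" by (rule prv_weak_excluded_middle) (use s in \<open>auto simp: wf_ctx_def sentence_def\<close>)
  then have "Or (Neg A) (dneg A) \<in> here" using closed_theory_prv0[OF closed_theory_here] s by (simp add: sentence_def dneg_def)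
  then have "Neg A \<in> here \<or> dneg A \<in> here" by (rule lindenbaum_prime[OF F])
  then show ?thesis using n s here_subset_there by (auto simp: there_def)
qed

lemma there_prime:
  assumes o: "Or A B \<in> there"
  shows "A \<in> there \<or> B \<in> there"
proof (rule ccontr)
  assume na: "\<not> ?thesis"
  have s: "sentence num A" "sentence num B" using closed_theoryD(1)[OF closed_theory_there o] by (auto simp: sentence_def)
  have n: "Neg A \<in> there" "Neg B \<in> there" using there_Neg_complete s na by auto
  have w: "wf_ctx num {Or A B, Neg A, Neg B}" using s by (auto simp: wf_ctx_def sentence_def)
  have "prv {Or A B, Neg A, Neg B} Bot"
    by (rule prv_Or_Neg_Neg[OF prv_assm prv_assm prv_assm]) (use w in auto)
  then have "Bot \<in> there" using closed_theoryD(2)[OF closed_theory_there, of "{Or A B, Neg A, Neg B}" Bot] o n by (auto simp: sentence_def)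
  then show False using closed_theoryD(3)[OF closed_theory_there] by simp
qed

lemma there_ImpI:
  assumes s: "sentence num (Imp A B)" and h: "A \<in> there \<Longrightarrow> B \<in> there"
  shows "Imp A B \<in> there"
proof (cases "A \<in> there")
  case True then show ?thesis using h closed_theory_ImpI_concl[OF closed_theory_there s] by blast
next
  case False
  then have "Neg A \<in> there" using there_Neg_complete s by (auto simp: sentence_def)
  then show ?thesis using closed_theory_ImpI_Neg[OF closed_theory_there s] by blast
qed

lemma here_omega:
  assumes s: "sentence num (All x A)" and h: "\<And>c. sort_ok num x (Cst c) \<Longrightarrow> sub1 x (Cst c) A \<in> here"
  shows "All x A \<in> here"
  using lindenbaum_All_counterexample[OF F _ s] h by blast

lemma there_omegaG:
  assumes s: "sentence num (All (GV n) A)" and h: "\<And>c. sub1 (GV n) (Cst c) A \<in> there"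
  shows "All (GV n) A \<in> there"
proof -
  have "sub1 (GV n) (Cst c) (dneg A) \<in> here" for c using h[of c] by (simp add: there_def dneg_def)
  then have a: "All (GV n) (dneg A) \<in> here" using s by (intro here_omega) (auto simp: sentence_def dneg_def)
  have sa: "sentence num (All (GV n) (dneg A))" using s by (auto simp: sentence_def dneg_def)
  have "prv {All (GV n) (dneg A)} (dneg (All (GV n) A))"
    by (rule prv_dneg_All[OF prv_assm]) (use wf_ctx_single[OF sa] sa s in \<open>auto simp: fvs_def sentence_def\<close>)
  then have "dneg (All (GV n) A) \<in> here" using closed_theory_prv1[OF closed_theory_here a] s by (simp add: sentence_dneg)
  then show ?thesis using s by (simp add: there_def)
qed

lemma there_omegaI:
  assumes s: "sentence num (All (IV n) A)" and h: "\<And>k. sub1 (IV n) (Cst (num k)) A \<in> there"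
  shows "All (IV n) A \<in> there"
proof -
  have A: "wf num A" "fv A \<subseteq> {IV n}" using s by (auto simp: sentence_def)
  have "num_guard_at n c A \<in> there" for c
  proof (cases "c \<in> range num")
    case True
    then obtain j where "c = num j" by auto
    then show ?thesis
      using closed_theory_prv1[OF closed_theory_there h[of j]] prv_num_guard_at_num[OF _ A] A
      by (auto simp: wf_ctx_def sentence_def num_guard_at_def wf_sub1)
  next
    case False
    then show ?thesis
      using closed_theory_prv0[OF closed_theory_there] prv_num_guard_at_not_num[OF _ A] A
      by (auto simp: wf_ctx_def sentence_def num_guard_at_def)
  qed
  then have "All (GV 0) (num_guard n A) \<in> there"
    using A wf_num_guard fv_num_guard[OF A(2)]
    by (intro there_omegaG) (auto simp: sentence_def sub1_num_guard)
  moreover have "prv {All (GV 0) (num_guard n A)} (All (IV n) A)"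
    using A by (intro prv_All_IV_num_guard[OF prv_assm]) (auto simp: wf_ctx_def wf_num_guard)
  ultimately show ?thesis using closed_theory_prv1[OF closed_theory_there] s by blast
qed

lemma there_omega:
  assumes s: "sentence num (All x A)" and h: "\<And>c. sort_ok num x (Cst c) \<Longrightarrow> sub1 x (Cst c) A \<in> there"
  shows "All x A \<in> there"
proof (cases x)
  case (GV n) then show ?thesis using there_omegaG s h by simp
next
  case (IV n) then show ?thesis using there_omegaI s h by simp
qed

lemma there_Ex_witness:
  assumes e: "Ex x A \<in> there"
  shows "\<exists>c. sort_ok num x (Cst c) \<and> sub1 x (Cst c) A \<in> there"
proof (rule ccontr)
  assume n: "\<not> ?thesis"
  have s: "sentence num (Ex x A)" using closed_theoryD(1)[OF closed_theory_there e] .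
  have sA: "sentence num (All x (Neg A))" using s by (auto simp: sentence_def)
  have "sub1 x (Cst c) (Neg A) \<in> there" if "sort_ok num x (Cst c)" for c
    using there_Neg_complete[OF sentence_sub1_Cst(2)[OF s that]] n that by auto
  then have a: "All x (Neg A) \<in> there" by (intro there_omega[OF sA])
  have w: "wf_ctx num {Ex x A, All x (Neg A)}" using wf_ctx_pair[OF s sA] .
  have "prv {Ex x A, All x (Neg A)} Bot"
    by (rule prv_Ex_All_Neg[OF prv_assm prv_assm]) (use w s sA in \<open>auto simp: fvs_def sentence_def\<close>)
  then have "Bot \<in> there" using closed_theory_prv2[OF closed_theory_there e a] by (simp add: sentence_def)
  then show False using closed_theoryD(3)[OF closed_theory_there] by simp
qed

lemma saturated_there: "saturated there"
  unfolding saturated_def using closed_theory_there there_prime there_Ex_witness there_omega by blast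

lemma saturated_here: "saturated here"
  unfolding saturated_def
  using closed_theory_here lindenbaum_prime[OF F] lindenbaum_Ex_witness[OF F] here_omega by blast

lemma truth_there:
  assumes "sentence num G"
  shows "csat num {a. atom_form a \<in> there} (env0 num) G \<longleftrightarrow> G \<in> there"
proof -
  let ?T = "{a. atom_form a \<in> there}"
  have "htsat num ?T ?T (env0 num) G \<longleftrightarrow> G \<in> there"
  proof (rule truth_saturated[OF saturated_there _ assms])
    fix A B
    assume "sentence num (Imp A B)" and "htsat num ?T ?T (env0 num) A \<longleftrightarrow> A \<in> there"
      and "htsat num ?T ?T (env0 num) B \<longleftrightarrow> B \<in> there"
    then show "htsat num ?T ?T (env0 num) (Imp A B) \<longleftrightarrow> Imp A B \<in> there"
      using there_ImpI closed_theory_mp[OF closed_theory_there] by (auto simp: htsat_total)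
  qed
  then show ?thesis by (simp add: htsat_total)
qed

lemma here_Imp_iff:
  assumes s: "sentence num (Imp A B)"
  shows "Imp A B \<in> here \<longleftrightarrow> (A \<in> here \<longrightarrow> B \<in> here) \<and> (A \<in> there \<longrightarrow> B \<in> there)"
proof
  assume "Imp A B \<in> here"
  then show "(A \<in> here \<longrightarrow> B \<in> here) \<and> (A \<in> there \<longrightarrow> B \<in> there)"
    using closed_theory_mp[OF closed_theory_here] closed_theory_mp[OF closed_theory_there]
      here_subset_there by blast
next
  assume h: "(A \<in> here \<longrightarrow> B \<in> here) \<and> (A \<in> there \<longrightarrow> B \<in> there)"
  have sAB: "sentence num A" "sentence num B" using s by (auto simp: sentence_def)
  have "Or A (Or (Imp A B) (Neg B)) \<in> here"
    by (rule closed_theory_Axioms[OF closed_theory_here]) (use HT_Axioms s in \<open>auto simp: sentence_def\<close>)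
  then consider "A \<in> here" | "Imp A B \<in> here" | "Neg B \<in> here"
    using lindenbaum_prime[OF F] by blast
  then show "Imp A B \<in> here"
  proof cases
    case 1
    then show ?thesis using h closed_theory_ImpI_concl[OF closed_theory_here s] by blast
  next
    case 3
    then have "B \<notin> there" using here_subset_there closed_theory_contra[OF closed_theory_there] by blast
    then have "dneg A \<notin> here" using h sAB by (auto simp: there_def)
    moreover have "Or (Neg A) (dneg A) \<in> here"
      using prv_weak_excluded_middle closed_theory_prv0[OF closed_theory_here] sAB
      by (auto simp: wf_ctx_def sentence_def dneg_def)
    ultimately have "Neg A \<in> here" using lindenbaum_prime[OF F] by blast
    then show ?thesis using closed_theory_ImpI_Neg[OF closed_theory_here s] by blast
  qed
qed

lemma truth_here:
  "sentence num G \<Longrightarrow> htsat num {a. atom_form a \<in> here} {a. atom_form a \<in> there} (env0 num) G \<longleftrightarrow> G \<in> here"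
proof (rule truth_saturated[OF saturated_here])
  fix A B
  assume s: "sentence num (Imp A B)"
    and "htsat num {a. atom_form a \<in> here} {a. atom_form a \<in> there} (env0 num) A \<longleftrightarrow> A \<in> here"
    and "htsat num {a. atom_form a \<in> here} {a. atom_form a \<in> there} (env0 num) B \<longleftrightarrow> B \<in> here"
  moreover have "sentence num A" "sentence num B" using s by (auto simp: sentence_def)
  ultimately show "htsat num {a. atom_form a \<in> here} {a. atom_form a \<in> there} (env0 num) (Imp A B)
      \<longleftrightarrow> Imp A B \<in> here"
    using here_Imp_iff[OF s] truth_there by simp
qed

lemma countermodel:
  defines "H \<equiv> {a. atom_form a \<in> here}" and "T \<equiv> {a. atom_form a \<in> there}"
  shows "standard_ht num H T" and "\<forall>G\<in>Gam. ht_models num H T G" and "\<not> ht_models num H T F"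
proof -
  have models: "ht_models num H T G" if "G \<in> Axioms num \<union> Gam" "sentence num G" for G
    using truth_here[OF that(2)] closed_theory_Axioms[OF closed_theory_here that]
    by (simp add: ht_models_def H_def T_def)
  have "H \<subseteq> T" using here_subset_there by (auto simp: H_def T_def)
  then show "standard_ht num H T"
    using models DefsAx_sentence by (auto simp: standard_ht_def Axioms_def)
  show "\<forall>G\<in>Gam. ht_models num H T G" using models Gam_sentences by blast
  show "\<not> ht_models num H T F"
    using truth_here[OF F(1)] lindenbaum_not_F[OF F] by (simp add: ht_models_def H_def T_def)
qed

end

theorem completeness:
  assumes "sentence num F"
    and "\<forall>H T. standard_ht num H T \<longrightarrow> (\<forall>G\<in>Gam. ht_models num H T G) \<longrightarrow> ht_models num H T F"
  shows "derivable num Gam F"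
  using countermodel[OF assms(1)] assms(2) unfolding derivable_def by blast

end

theorem mainTheorem13:
  fixes num :: "int \<Rightarrow> 'c::{linorder,countable}"
    and Gam :: "('c, 'p::countable) form set"
    and F :: "('c, 'p) form"
  assumes num_mono: "strict_mono num"
    and num_contiguous: "\<forall>x m n. num m \<le> x \<longrightarrow> x \<le> num n \<longrightarrow> x \<in> range num"
    and Gam_sentences: "\<forall>G\<in>Gam. sentence num G"
    and F_sentence: "sentence num F"
  shows "derivable num Gam F \<longleftrightarrow>
    (\<forall>H T. standard_ht num H T \<longrightarrow> (\<forall>G\<in>Gam. ht_models num H T G) \<longrightarrow> ht_models num H T F)"
proof -
  \<comment> \<open>The numerals need not be contiguous for this argument.\<close>
  interpret ht_calculus num Gam
    using num_mono Gam_sentences by unfold_locales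
  show ?thesis using soundness completeness[OF F_sentence] by blast
qed

end
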